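(* Let $F$ be a strictly increasing toxicity-rate function with values in $[0,1]$, let $d_1<\dots<d_m$ be fixed dose levels, let $p\in(0,1)$ be the target rate, and fix constants $\Delta p_1>0$, $\Delta p_2>0$. Consider the interval design defined in the context, with toxicity responses $Y_i\mid X_i\sim\mathrm{Bernoulli}(F(X_i))$ independent given the allocations. (i) Suppose no level $d_u$ satisfies $F(d_u)\in(p-\Delta p_1,p+\Delta p_2)$, but $p\in[F(d_1),F(d_m)]$. Let $d_j,d_{j+1}$ be the two adjacent doses whose $F$ values straddle the target interval, i.e. $F(d_j)\le p-\Delta p_1$ and $F(d_{j+1})\ge p+\Delta p_2$. Then with probability $1$ the design eventually oscillates between $d_j$ and $d_{j+1}$: from some point on only $d_j$ and $d_{j+1}$ are allocated, and both are allocated infinitely often. (ii) Suppose more than one level $d_u$ satisfies $F(d_u)\in(p-\Delta p_1,p+\Delta p_2)$. Then with probability $1$ the allocations converge to one of these levels, i.e. almost surely there exist a level $d_v$ with $F(d_v)\in(p-\Delta p_1,p+\Delta p_2)$ and $N$ such that $X_i=d_v$ for all $i\ge N$.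
   Context: Interval design: subjects are treated one at a time; the first dose $X_1$ is arbitrary. After observing the response of subject $n$, allocated to the current dose $d_u=X_n$, compute $\hat F_n(d_u)=\sum_{i\le n}Y_i\mathbf{1}[X_i=d_u]/\sum_{i\le n}\mathbf{1}[X_i=d_u]$ (the raw toxicity frequency at $d_u$, possibly replaced by its monotonized version via isotonic regression over the dose levels with data). If $\hat F_n(d_u)\in(p-\Delta p_1,p+\Delta p_2)$, set $X_{n+1}=d_u$. If $\hat F_n(d_u)\le p-\Delta p_1$, set $X_{n+1}=d_{u+1}$ (or $d_m$ if $u=m$). If $\hat F_n(d_u)\ge p+\Delta p_2$, set $X_{n+1}=d_{u-1}$ (or $d_1$ if $u=1$). The design never skips dose levels. *)

theory Defs
  imports "HOL-Probability.Probability"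
begin

text \<open>Dose levels are indexed 0, ..., m-1 (paper: d_1, ..., d_m).
  Subjects are indexed 0, 1, 2, ... (paper: 1, 2, 3, ...).
  A response sequence is y :: nat => bool (True = toxicity).\<close>

definition tox_freq :: "nat list \<Rightarrow> (nat \<Rightarrow> bool) \<Rightarrow> nat \<Rightarrow> real" where
  "tox_freq xs y u =
     real (card {i. i < length xs \<and> xs ! i = u \<and> y i})
     / real (card {i. i < length xs \<and> xs ! i = u})"

definition next_dose :: "nat \<Rightarrow> real \<Rightarrow> real \<Rightarrow> real \<Rightarrow> nat list \<Rightarrow> (nat \<Rightarrow> bool) \<Rightarrow> nat" where
  "next_dose m p dp1 dp2 xs y =
     (let u = last xs; est = tox_freq xs y u in
      if est \<le> p - dp1 then (if u + 1 < m then u + 1 else m - 1)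
      else if est \<ge> p + dp2 then (if u = 0 then 0 else u - 1)
      else u)"

text \<open>allocs ... n = [X_0, ..., X_n]; X_{n+1} depends only on y 0 .. y n.\<close>
primrec allocs :: "nat \<Rightarrow> real \<Rightarrow> real \<Rightarrow> real \<Rightarrow> nat \<Rightarrow> (nat \<Rightarrow> bool) \<Rightarrow> nat \<Rightarrow> nat list" where
  "allocs m p dp1 dp2 x0 y 0 = [x0]"
| "allocs m p dp1 dp2 x0 y (Suc n) =
     allocs m p dp1 dp2 x0 y n @ [next_dose m p dp1 dp2 (allocs m p dp1 dp2 x0 y n) y]"

definition alloc :: "nat \<Rightarrow> real \<Rightarrow> real \<Rightarrow> real \<Rightarrow> nat \<Rightarrow> (nat \<Rightarrow> bool) \<Rightarrow> nat \<Rightarrow> nat" where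
  "alloc m p dp1 dp2 x0 y n = allocs m p dp1 dp2 x0 y n ! n"

end

theory Submission
  imports Defs
begin

text \<open>Along the subjects allocated to a fixed dose u the responses are conditionally
  Bernoulli(F(d u)), so the toxicity estimate at u is the success rate of a Bernoulli
  sequence. Two supermartingale arguments on the tree of response paths show that, almost surely
  and for every threshold c, the estimate at u is eventually on the same side of c as F(d u) when
  F(d u) \<noteq> c (a maximal inequality for the squared deviation rate), and is infinitely often on
  either side of c when F(d u) = c (recurrence of the centred random walk).
  On such a sample path the allocation sequence is a deterministic walk: a dose visited infinitely
  often whose F-value lies in the target interval absorbs it, doses below the interval push it up
  and doses above push it down.\<close>

section \<open>Response paths and supermartingales\<close>

definition responses :: "(nat \<Rightarrow> 'a \<Rightarrow> bool) \<Rightarrow> nat \<Rightarrow> 'a \<Rightarrow> bool list" where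
  "responses Y n \<omega> = map (\<lambda>i. Y i \<omega>) [0..<n]"

lemma responses_0 [simp]: "responses Y 0 \<omega> = []"
  by (simp add: responses_def)

lemma responses_Suc: "responses Y (Suc n) \<omega> = responses Y n \<omega> @ [Y n \<omega>]"
  by (simp add: responses_def)

lemma length_responses [simp]: "length (responses Y n \<omega>) = n"
  by (simp add: responses_def)

lemma nth_responses [simp]: "i < n \<Longrightarrow> responses Y n \<omega> ! i = Y i \<omega>"
  by (simp add: responses_def)

lemma responses_eq_iff: "length ys = n \<Longrightarrow> responses Y n \<omega> = ys \<longleftrightarrow> (\<forall>i<n. Y i \<omega> = ys ! i)"
  by (auto simp: list_eq_iff_nth_eq)

text \<open>q zs is the conditional probability that the response following the prefix zs is True.\<close>

definition path_prob :: "(bool list \<Rightarrow> real) \<Rightarrow> bool list \<Rightarrow> real" where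
  "path_prob q ys = (\<Prod>i<length ys. if ys ! i then q (take i ys) else 1 - q (take i ys))"

definition path_expect :: "(bool list \<Rightarrow> real) \<Rightarrow> nat \<Rightarrow> (bool list \<Rightarrow> real) \<Rightarrow> real" where
  "path_expect q n f = (\<Sum>ys | length ys = n. path_prob q ys * f ys)"

lemma path_prob_Nil [simp]: "path_prob q [] = 1"
  by (simp add: path_prob_def)

lemma path_prob_snoc: "path_prob q (ys @ [b]) = path_prob q ys * (if b then q ys else 1 - q ys)"
proof -
  have "(\<Prod>i<length ys. if (ys @ [b]) ! i then q (take i (ys @ [b])) else 1 - q (take i (ys @ [b])))
      = (\<Prod>i<length ys. if ys ! i then q (take i ys) else 1 - q (take i ys))"
    by (intro prod.cong) (auto simp: nth_append)
  then show ?thesis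
    by (simp add: path_prob_def nth_append)
qed

lemma path_prob_nonneg: "(\<And>ys. 0 \<le> q ys \<and> q ys \<le> 1) \<Longrightarrow> 0 \<le> path_prob q ys"
  unfolding path_prob_def by (intro prod_nonneg) auto

lemma path_expect_0 [simp]: "path_expect q 0 f = f []"
proof -
  have "{ys::bool list. length ys = 0} = {[]}"
    by auto
  then show ?thesis
    by (simp add: path_expect_def)
qed

lemma path_expect_Suc:
  "path_expect q (Suc n) f = path_expect q n (\<lambda>ys. q ys * f (ys @ [True]) + (1 - q ys) * f (ys @ [False]))"
proof -
  let ?snoc = "\<lambda>(ys, b). ys @ [b :: bool]"
  have lists_Suc: "{ys. length ys = Suc n} = ?snoc ` ({ys. length ys = n} \<times> UNIV)"
    by (auto simp: image_iff length_Suc_conv_rev)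
  have "inj_on ?snoc ({ys. length ys = n} \<times> UNIV)"
    by (auto simp: inj_on_def)
  then have "path_expect q (Suc n) f
      = (\<Sum>(ys, b) \<in> {ys. length ys = n} \<times> UNIV. path_prob q (ys @ [b]) * f (ys @ [b]))"
    unfolding path_expect_def lists_Suc by (subst sum.reindex) (simp_all add: case_prod_beta)
  also have "\<dots> = (\<Sum>ys | length ys = n. \<Sum>b\<in>UNIV. path_prob q (ys @ [b]) * f (ys @ [b]))"
    by (simp add: sum.cartesian_product)
  also have "\<dots> = path_expect q n (\<lambda>ys. q ys * f (ys @ [True]) + (1 - q ys) * f (ys @ [False]))"
    unfolding path_expect_def UNIV_bool by (auto intro!: sum.cong simp: path_prob_snoc algebra_simps)
  finally show ?thesis .
qed

lemma path_expect_mono: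
  assumes "\<And>ys. 0 \<le> q ys \<and> q ys \<le> 1" and "\<And>ys. length ys = n \<Longrightarrow> f ys \<le> g ys"
  shows "path_expect q n f \<le> path_expect q n g"
  unfolding path_expect_def using assms by (intro sum_mono mult_left_mono) (auto intro: path_prob_nonneg)

definition run :: "('s \<Rightarrow> bool list \<Rightarrow> bool \<Rightarrow> 's) \<Rightarrow> 's \<Rightarrow> bool list \<Rightarrow> 's" where
  "run upd s0 ys = fold (\<lambda>i s. upd s (take i ys) (ys ! i)) [0..<length ys] s0"

lemma run_Nil [simp]: "run upd s0 [] = s0"
  by (simp add: run_def)

lemma run_snoc: "run upd s0 (ys @ [b]) = upd (run upd s0 ys) ys b"
proof -
  have "fold (\<lambda>i s. upd s (take i (ys @ [b])) ((ys @ [b]) ! i)) [0..<length ys] s0 = run upd s0 ys"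
    unfolding run_def by (intro fold_cong) (auto simp: nth_append)
  then show ?thesis
    by (simp add: run_def)
qed

lemma run_invariant:
  assumes "I s0" and "\<And>s ys b. I s \<Longrightarrow> I (upd s ys b)"
  shows "I (run upd s0 ys)"
  by (induction ys rule: rev_induct) (simp_all add: run_snoc assms)

lemma path_expect_run_le:
  assumes q: "\<And>ys. 0 \<le> q ys \<and> q ys \<le> 1"
    and inv0: "I s0" and inv_step: "\<And>s ys b. I s \<Longrightarrow> I (upd s ys b)"
    and super: "\<And>s ys. I s \<Longrightarrow> q ys * g (upd s ys True) + (1 - q ys) * g (upd s ys False) \<le> g s"
  shows "path_expect q n (\<lambda>ys. g (run upd s0 ys)) \<le> g s0"
proof (induction n)
  case (Suc n)
  have "path_expect q (Suc n) (\<lambda>ys. g (run upd s0 ys)) \<le> path_expect q n (\<lambda>ys. g (run upd s0 ys))"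
    unfolding path_expect_Suc run_snoc
    by (intro path_expect_mono q super run_invariant[of I, OF inv0 inv_step])
  with Suc show ?case
    by linarith
qed simp

locale response_process = prob_space M for M :: "'a measure" +
  fixes Y :: "nat \<Rightarrow> 'a \<Rightarrow> bool" and q :: "bool list \<Rightarrow> real"
  assumes measurable_Y: "\<And>i. Y i \<in> measurable M (count_space UNIV)"
    and q_range: "\<And>ys. 0 \<le> q ys \<and> q ys \<le> 1"
    and prob_next_True: "\<And>ys. prob {\<omega>\<in>space M. responses Y (length ys) \<omega> = ys \<and> Y (length ys) \<omega>}
                            = q ys * prob {\<omega>\<in>space M. responses Y (length ys) \<omega> = ys}"
begin

lemma sets_Y_eq: "{\<omega>\<in>space M. Y i \<omega> = b} \<in> sets M"
  using measurable_sets[OF measurable_Y, of "{b}" i] by (simp add: vimage_def Int_def conj_commute)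

lemma sets_responses_eq: "{\<omega>\<in>space M. responses Y n \<omega> = ys} \<in> sets M"
proof -
  have "{\<omega>\<in>space M. responses Y n \<omega> = ys}
      = (if length ys = n then (\<Inter>i<n. {\<omega>\<in>space M. Y i \<omega> = ys ! i}) \<inter> space M else {})"
    by (auto simp: responses_eq_iff)
  then show ?thesis
    using sets_Y_eq by auto
qed

lemma sets_responses_pred: "{\<omega>\<in>space M. P (responses Y n \<omega>)} \<in> sets M"
proof -
  have "{\<omega>\<in>space M. P (responses Y n \<omega>)}
      = (\<Union>ys\<in>{ys. length ys = n \<and> P ys}. {\<omega>\<in>space M. responses Y n \<omega> = ys})"
    by auto
  moreover have "finite {ys::bool list. length ys = n \<and> P ys}"
    using finite_list_length[of n] by (rule rev_finite_subset) auto
  ultimately show ?thesis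
    using sets_responses_eq by auto
qed

lemma prob_responses_eq: "length ys = n \<Longrightarrow> prob {\<omega>\<in>space M. responses Y n \<omega> = ys} = path_prob q ys"
proof (induction n arbitrary: ys)
  case 0
  then show ?case by (simp add: prob_space)
next
  case (Suc n)
  then obtain zs b where ys: "ys = zs @ [b]" and zs: "length zs = n"
    by (metis length_Suc_conv_rev)
  let ?Z = "{\<omega>\<in>space M. responses Y n \<omega> = zs}"
  let ?T = "{\<omega>\<in>space M. responses Y n \<omega> = zs \<and> Y n \<omega>}"
  have T: "?T \<in> sets M" "prob ?T = q zs * path_prob q zs"
    using sets_responses_pred[of "\<lambda>ys. ys = zs" n] sets_Y_eq[of n True]
      prob_next_True[of zs] Suc.IH[OF zs] zs
    by (auto simp: Collect_conj_eq[symmetric] Int_def)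
  show ?case
  proof (cases b)
    case True
    have "{\<omega>\<in>space M. responses Y (Suc n) \<omega> = ys} = ?T"
      by (auto simp: ys True responses_Suc)
    then show ?thesis
      using T by (simp add: ys True path_prob_snoc mult.commute)
  next
    case False
    have "prob {\<omega>\<in>space M. responses Y (Suc n) \<omega> = ys} = prob (?Z - ?T)"
      by (rule arg_cong[where f = prob]) (auto simp: ys False responses_Suc)
    also have "\<dots> = prob ?Z - prob ?T"
      using T sets_responses_eq by (intro finite_measure_Diff) auto
    finally show ?thesis
      using T Suc.IH[OF zs] by (simp add: ys False path_prob_snoc algebra_simps)
  qed
qed

lemma prob_responses_pred:
  "prob {\<omega>\<in>space M. P (responses Y n \<omega>)} = path_expect q n (\<lambda>ys. if P ys then 1 else 0)"
proof -
  let ?L = "{ys. length ys = n \<and> P ys}"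
  have fin: "finite ?L"
    using finite_list_length[of n] by (rule rev_finite_subset) auto
  have "prob {\<omega>\<in>space M. P (responses Y n \<omega>)}
      = prob (\<Union>ys\<in>?L. {\<omega>\<in>space M. responses Y n \<omega> = ys})"
    by (rule arg_cong[where f = prob]) auto
  also have "\<dots> = (\<Sum>ys\<in>?L. prob {\<omega>\<in>space M. responses Y n \<omega> = ys})"
    using fin sets_responses_eq by (intro finite_measure_finite_Union) (auto simp: disjoint_family_on_def)
  also have "\<dots> = (\<Sum>ys\<in>?L. path_prob q ys)"
    by (intro sum.cong) (auto simp: prob_responses_eq)
  also have "\<dots> = path_expect q n (\<lambda>ys. if P ys then 1 else 0)"
    unfolding path_expect_def by (rule sum.mono_neutral_cong_left) (auto simp: finite_list_length)
  finally show ?thesis .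
qed

lemma prob_run_event_le:
  assumes inv0: "I s0" and inv_step: "\<And>s ys b. I s \<Longrightarrow> I (upd s ys b)"
    and super: "\<And>s ys. I s \<Longrightarrow> q ys * g (upd s ys True) + (1 - q ys) * g (upd s ys False) \<le> g s"
    and nonneg: "\<And>s. I s \<Longrightarrow> 0 \<le> g s" and large: "\<And>s. I s \<Longrightarrow> P s \<Longrightarrow> t \<le> g s" and t: "0 < t"
  shows "prob {\<omega>\<in>space M. P (run upd s0 (responses Y n \<omega>))} \<le> g s0 / t"
proof -
  have I: "I (run upd s0 ys)" for ys
    using inv0 inv_step by (rule run_invariant)
  have "t * prob {\<omega>\<in>space M. P (run upd s0 (responses Y n \<omega>))}
      = path_expect q n (\<lambda>ys. if P (run upd s0 ys) then t else 0)"
    unfolding prob_responses_pred[where P = "\<lambda>ys. P (run upd s0 ys)"] path_expect_def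
    by (simp add: sum_distrib_left) (intro sum.cong, auto)
  also have "\<dots> \<le> path_expect q n (\<lambda>ys. g (run upd s0 ys))"
    using nonneg large I by (intro path_expect_mono q_range) auto
  also have "\<dots> \<le> g s0"
    using q_range inv0 inv_step super by (rule path_expect_run_le)
  finally show ?thesis
    using t by (simp add: field_simps)
qed

lemma AE_of_vanishing_bounds:
  assumes sets: "\<And>K n. A K n \<in> sets M" and inc: "\<And>K n. A K n \<subseteq> A K (Suc n)"
    and bound: "\<And>K n. 1 \<le> K \<Longrightarrow> prob (A K n) \<le> C / real K"
    and cover: "\<And>\<omega> K. \<omega> \<in> space M \<Longrightarrow> \<not> P \<omega> \<Longrightarrow> 1 \<le> K \<Longrightarrow> \<exists>n. \<omega> \<in> A K n"
  shows "AE \<omega> in M. P \<omega>"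
proof (rule AE_I')
  define N where "N = (\<Inter>K. \<Union>n. A (Suc K) n)"
  have N_sets: "N \<in> sets M"
    unfolding N_def using sets by blast
  have bound_N: "prob N \<le> C / real (Suc K)" for K
  proof -
    have "(\<lambda>n. prob (A (Suc K) n)) \<longlonglongrightarrow> prob (\<Union>n. A (Suc K) n)"
      using sets incseq_SucI[of "A (Suc K)", OF inc] by (intro finite_Lim_measure_incseq) auto
    then have "prob (\<Union>n. A (Suc K) n) \<le> C / real (Suc K)"
      by (rule LIMSEQ_le_const2) (use bound[of "Suc K"] in auto)
    moreover have "prob N \<le> prob (\<Union>n. A (Suc K) n)"
      using sets by (intro finite_measure_mono) (auto simp: N_def)
    ultimately show ?thesis
      by linarith
  qed
  have "(\<lambda>K. C / real (Suc K)) \<longlonglongrightarrow> 0"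
    using LIMSEQ_Suc[OF lim_const_over_n[of C]] by simp
  then have "prob N \<le> 0"
    by (rule LIMSEQ_le_const) (use bound_N in simp)
  with N_sets show "N \<in> null_sets M"
    using measure_nonneg[of M N] by (auto simp: emeasure_eq_measure)
  show "{\<omega> \<in> space M. \<not> P \<omega>} \<subseteq> N"
  proof
    fix \<omega> assume "\<omega> \<in> {\<omega> \<in> space M. \<not> P \<omega>}"
    then have "\<exists>n. \<omega> \<in> A (Suc K) n" for K
      using cover by simp
    then show "\<omega> \<in> N"
      by (auto simp: N_def)
  qed
qed

end

section \<open>Conditionally Bernoulli subsequences\<close>

lemma centered_square_step:
  fixes q0 D :: real
  shows "q0 * (D + (1 - q0))^2 + (1 - q0) * (D - q0)^2 = D^2 + q0 * (1 - q0)"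
  by (simp add: power2_eq_square algebra_simps)

lemma centered_square_step_scaled:
  fixes q0 D z c :: real
  shows "q0 * ((D + (1 - q0))^2 / z + c) + (1 - q0) * ((D - q0)^2 / z + c) = (D^2 + q0 * (1 - q0)) / z + c"
proof -
  have "q0 * ((D + (1 - q0))^2 / z + c) + (1 - q0) * ((D - q0)^2 / z + c)
      = (q0 * (D + (1 - q0))^2 + (1 - q0) * (D - q0)^2) / z + c"
    by (simp add: algebra_simps add_divide_distrib diff_divide_distrib)
  then show ?thesis
    by (simp only: centered_square_step)
qed

lemma inverse_square_step:
  fixes k :: nat and D v :: real
  assumes "1 \<le> k" "0 \<le> v" "v \<le> 1"
  shows "(D^2 + v) / (real k + 1)^2 + 1 / (real k + 1) \<le> D^2 / (real k)^2 + 1 / real k"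
proof -
  have k: "0 < real k"
    using assms by simp
  have "D^2 / (real k + 1)^2 \<le> D^2 / (real k)^2"
    using k by (intro divide_left_mono) (auto intro: power_mono)
  moreover have "v / (real k + 1)^2 \<le> 1 / (real k * (real k + 1))"
    using assms k by (intro frac_le) (auto simp: power2_eq_square)
  moreover have "1 / (real k * (real k + 1)) = 1 / real k - 1 / (real k + 1)"
    using k by (simp add: field_simps)
  ultimately show ?thesis
    by (simp add: add_divide_distrib)
qed

text \<open>For k \<ge> K this is D^2/k^2 + 1/k, a supermartingale dominating the squared deviation rate
  of a centred walk D after k steps; for k < K it is the value at scale K plus the variance still
  to come before time K.\<close>

definition deviation_potential :: "nat \<Rightarrow> nat \<Rightarrow> real \<Rightarrow> real" where
  "deviation_potential K k D =
     (if k \<le> K then D^2 / (real K)^2 + ((real K - real k) / (real K)^2 + 1 / real K)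
      else D^2 / (real k)^2 + 1 / real k)"

lemma deviation_potential_nonneg: "0 \<le> deviation_potential K k D"
  by (simp add: deviation_potential_def)

lemma deviation_potential_step:
  assumes K: "1 \<le> K" and q0: "0 \<le> q0" "q0 \<le> 1"
  shows "q0 * deviation_potential K (Suc k) (D + (1 - q0)) + (1 - q0) * deviation_potential K (Suc k) (D - q0)
         \<le> deviation_potential K k D"
proof -
  let ?v = "q0 * (1 - q0)"
  have v: "0 \<le> ?v" "?v \<le> 1"
    using q0 by (auto intro: mult_le_one)
  show ?thesis
  proof (cases "Suc k \<le> K")
    case True
    have "(D^2 + ?v) / (real K)^2 + (real K - real (Suc k)) / (real K)^2
        \<le> D^2 / (real K)^2 + (real K - real k) / (real K)^2"
      using v by (simp add: add_divide_distrib[symmetric] divide_right_mono)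
    with True show ?thesis
      by (simp add: deviation_potential_def centered_square_step_scaled)
  next
    case False
    then have "deviation_potential K k D = D^2 / (real k)^2 + 1 / real k"
      by (cases "k = K") (auto simp: deviation_potential_def)
    moreover have "q0 * deviation_potential K (Suc k) (D + (1 - q0))
        + (1 - q0) * deviation_potential K (Suc k) (D - q0)
        = (D^2 + ?v) / (real k + 1)^2 + 1 / (real k + 1)"
      using False centered_square_step_scaled[of q0 D "(1 + real k)^2" "1 / (1 + real k)"]
      by (simp add: deviation_potential_def add.commute)
    ultimately show ?thesis
      using False K v inverse_square_step[of k ?v D] by simp
  qed
qed

definition barrier_quadratic :: "real \<Rightarrow> real \<Rightarrow> real" where
  "barrier_quadratic H x = (x + 1) * (H + 1 - x)"

lemma barrier_quadratic_le: "barrier_quadratic H x \<le> (H + 2)^2"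
proof -
  have "4 * barrier_quadratic H x = (H + 2)^2 - ((x + 1) - (H + 1 - x))^2"
    unfolding barrier_quadratic_def by (simp add: power2_eq_square algebra_simps)
  then show ?thesis
    using zero_le_power2[of "(x + 1) - (H + 1 - x)"] zero_le_power2[of "H + 2"] by linarith
qed

lemma barrier_quadratic_nonneg: "-1 \<le> x \<Longrightarrow> x \<le> H + 1 \<Longrightarrow> 0 \<le> barrier_quadratic H x"
  unfolding barrier_quadratic_def by simp

lemma barrier_quadratic_pos: "0 < x \<Longrightarrow> x < H \<Longrightarrow> 0 < barrier_quadratic H x"
  unfolding barrier_quadratic_def by simp

lemma barrier_quadratic_step:
  "q0 * barrier_quadratic H (D + (1 - q0)) + (1 - q0) * barrier_quadratic H (D - q0)
   = barrier_quadratic H D - q0 * (1 - q0)"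
  unfolding barrier_quadratic_def by (simp add: algebra_simps power2_eq_square)

lemma convex_combination_le:
  fixes q a b c :: real
  assumes "0 \<le> q" "q \<le> 1" "a \<le> c" "b \<le> c"
  shows "q * a + (1 - q) * b \<le> c"
  using convex_bound_le[of a c b q "1 - q"] assms by simp

datatype phase = Warmup | Inside | Above | Below

lemma shifted_square_over_cube_le:
  fixes j :: nat and v :: real
  assumes "1 \<le> j" "0 < v"
  shows "(real j + 2)^2 / (v * real j ^ 3) \<le> 9 / v / real j"
proof -
  have "real j + 2 \<le> 3 * real j"
    using assms by simp
  then have "(real j + 2)^2 \<le> 9 * (real j)^2"
    using power_mono[of "real j + 2" "3 * real j" 2] by (simp add: power_mult_distrib)
  then have "(real j + 2)^2 / (v * real j ^ 3) \<le> 9 * (real j)^2 / (v * real j ^ 3)"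
    using assms by (intro divide_right_mono) auto
  also have "\<dots> = 9 / v / real j"
    using assms by (simp add: field_simps power2_eq_square power3_eq_cube)
  finally show ?thesis .
qed

lemma responses_Not: "responses (\<lambda>i \<omega>. \<not> Y i \<omega>) n \<omega> = map Not (responses Y n \<omega>)"
  by (simp add: responses_def)

lemma map_Not_eq_iff: "map Not xs = ys \<longleftrightarrow> xs = map Not ys"
  by (auto simp: comp_def)

locale bernoulli_subsequence = response_process +
  fixes active :: "bool list \<Rightarrow> bool" and q0 :: real
  assumes q_active: "\<And>ys. active ys \<Longrightarrow> q ys = q0"
    and q0_range: "0 \<le> q0" "q0 \<le> 1"
begin

definition count_trials :: "bool list \<Rightarrow> nat" where
  "count_trials = run (\<lambda>k ys b. if active ys then Suc k else k) 0"

definition count_successes :: "bool list \<Rightarrow> nat" where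
  "count_successes = run (\<lambda>k ys b. if active ys \<and> b then Suc k else k) 0"

abbreviation trials :: "'a \<Rightarrow> nat \<Rightarrow> nat" where
  "trials \<omega> n \<equiv> count_trials (responses Y n \<omega>)"

abbreviation successes :: "'a \<Rightarrow> nat \<Rightarrow> nat" where
  "successes \<omega> n \<equiv> count_successes (responses Y n \<omega>)"

lemma count_trials_Nil [simp]: "count_trials [] = 0"
  by (simp add: count_trials_def)

lemma count_successes_Nil [simp]: "count_successes [] = 0"
  by (simp add: count_successes_def)

lemma count_trials_snoc: "count_trials (ys @ [b]) = (if active ys then Suc (count_trials ys) else count_trials ys)"
  by (simp add: count_trials_def run_snoc)

lemma count_successes_snoc:
  "count_successes (ys @ [b]) = (if active ys \<and> b then Suc (count_successes ys) else count_successes ys)"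
  by (simp add: count_successes_def run_snoc)

lemma count_successes_le_trials: "count_successes ys \<le> count_trials ys"
  by (induction ys rule: rev_induct) (auto simp: count_trials_snoc count_successes_snoc)

lemma trials_Suc: "trials \<omega> (Suc n) = (if active (responses Y n \<omega>) then Suc (trials \<omega> n) else trials \<omega> n)"
  by (simp add: responses_Suc count_trials_snoc)

lemma successes_Suc:
  "successes \<omega> (Suc n) = (if active (responses Y n \<omega>) \<and> Y n \<omega> then Suc (successes \<omega> n) else successes \<omega> n)"
  by (simp add: responses_Suc count_successes_snoc)

lemma trials_mono: "n \<le> n' \<Longrightarrow> trials \<omega> n \<le> trials \<omega> n'"
  by (induction n' rule: dec_induct) (auto simp: trials_Suc)

lemma trials_unbounded:
  assumes "\<forall>N. \<exists>n\<ge>N. active (responses Y n \<omega>)"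
  shows "\<exists>N. K \<le> trials \<omega> N"
proof (induction K)
  case (Suc K)
  then obtain N where "K \<le> trials \<omega> N"
    by blast
  moreover obtain n where "N \<le> n" "active (responses Y n \<omega>)"
    using assms by blast
  ultimately have "Suc K \<le> trials \<omega> (Suc n)"
    using trials_mono[of N n \<omega>] by (simp add: trials_Suc)
  then show ?case
    by blast
qed simp

definition increment :: "bool \<Rightarrow> real" where
  "increment b = (if b then 1 - q0 else - q0)"

lemma increment_bounds: "-1 \<le> increment b" "increment b \<le> 1"
  using q0_range by (auto simp: increment_def)

definition upper_excursion :: "nat \<Rightarrow> real \<Rightarrow> nat \<times> real \<times> bool \<Rightarrow> bool list \<Rightarrow> bool \<Rightarrow> nat \<times> real \<times> bool" where
  "upper_excursion K eps s ys b = (case s of (k, D, stopped) \<Rightarrow>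
     if stopped \<or> \<not> active ys then s
     else (Suc k, D + increment b, K \<le> Suc k \<and> eps * real (Suc k) \<le> D + increment b))"

definition upper_run :: "nat \<Rightarrow> real \<Rightarrow> 'a \<Rightarrow> nat \<Rightarrow> nat \<times> real \<times> bool" where
  "upper_run K eps \<omega> n = run (upper_excursion K eps) (0, 0, False) (responses Y n \<omega>)"

lemma upper_run_Suc:
  "upper_run K eps \<omega> (Suc n) = upper_excursion K eps (upper_run K eps \<omega> n) (responses Y n \<omega>) (Y n \<omega>)"
  by (simp add: upper_run_def responses_Suc run_snoc)

lemma upper_run_stopped_Suc:
  "snd (snd (upper_run K eps \<omega> n)) \<Longrightarrow> snd (snd (upper_run K eps \<omega> (Suc n)))"
  by (cases "upper_run K eps \<omega> n") (simp add: upper_run_Suc upper_excursion_def)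

lemma upper_run_tracks_deviation:
  assumes "upper_run K eps \<omega> n = (k, D, False)"
  shows "k = trials \<omega> n \<and> D = real (successes \<omega> n) - q0 * real (trials \<omega> n)"
  using assms
proof (induction n arbitrary: k D)
  case (Suc n)
  obtain k' D' stopped where r: "upper_run K eps \<omega> n = (k', D', stopped)"
    by (cases "upper_run K eps \<omega> n")
  with Suc.prems have "\<not> stopped"
    using upper_run_stopped_Suc[of K eps \<omega> n] by auto
  with Suc.IH r Suc.prems show ?case
    by (auto simp: upper_run_Suc upper_excursion_def trials_Suc successes_Suc increment_def
        algebra_simps split: if_splits)
qed (simp add: upper_run_def)

lemma upper_run_stops:
  assumes "active (responses Y n \<omega>)" "K \<le> trials \<omega> (Suc n)"
    and "eps * real (trials \<omega> (Suc n)) \<le> real (successes \<omega> (Suc n)) - q0 * real (trials \<omega> (Suc n))"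
  shows "snd (snd (upper_run K eps \<omega> (Suc n)))"
proof (cases "snd (snd (upper_run K eps \<omega> n))")
  case False
  then obtain k D where r: "upper_run K eps \<omega> n = (k, D, False)"
    by (cases "upper_run K eps \<omega> n") auto
  with upper_run_tracks_deviation[OF r] assms show ?thesis
    by (auto simp: upper_run_Suc upper_excursion_def trials_Suc successes_Suc increment_def algebra_simps)
qed (rule upper_run_stopped_Suc)

lemma prob_upper_run_stopped_le:
  assumes K: "1 \<le> K" and eps: "0 < eps"
  shows "prob {\<omega>\<in>space M. snd (snd (upper_run K eps \<omega> n))} \<le> 2 / (eps^2 * real K)"
proof -
  define g where "g s = (case s of (k, D, _) \<Rightarrow> deviation_potential K k D)" for s :: "nat \<times> real \<times> bool"
  define I where "I s = (case s of (k, D, stopped) \<Rightarrow> stopped \<longrightarrow> K \<le> k \<and> eps * real k \<le> D)"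
    for s :: "nat \<times> real \<times> bool"
  have "prob {\<omega>\<in>space M. snd (snd (upper_run K eps \<omega> n))} \<le> g (0, 0, False) / eps^2"
    unfolding upper_run_def
  proof (rule prob_run_event_le[where I = I])
    fix s :: "nat \<times> real \<times> bool" and ys
    obtain k D stopped where s: "s = (k, D, stopped)"
      by (cases s)
    show "I (upper_excursion K eps s ys b)" if "I s" for b
      using that by (auto simp: s I_def upper_excursion_def)
    show "q ys * g (upper_excursion K eps s ys True) + (1 - q ys) * g (upper_excursion K eps s ys False) \<le> g s"
      using deviation_potential_step[OF K q0_range, of k D] q_active[of ys]
      by (auto simp: s g_def upper_excursion_def increment_def algebra_simps)
  next
    fix s assume "I s" "snd (snd s)"
    then obtain k D where s: "s = (k, D, True)" "K \<le> k" "eps * real k \<le> D"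
      by (auto simp: I_def split: prod.splits)
    then have "(eps * real k)^2 \<le> D^2"
      using eps by (intro power_mono) auto
    then have "eps^2 \<le> D^2 / (real k)^2"
      using s K by (simp add: field_simps power_mult_distrib)
    also have "\<dots> \<le> g s"
      using s by (auto simp: g_def deviation_potential_def)
    finally show "eps^2 \<le> g s" .
  qed (use eps in \<open>auto simp: I_def g_def deviation_potential_nonneg\<close>)
  also have "g (0, 0, False) = 2 / real K"
    using K by (simp add: g_def deviation_potential_def field_simps power2_eq_square)
  finally show ?thesis
    by (simp add: field_simps)
qed

theorem AE_eventually_rate_below:
  assumes c: "q0 < c"
  shows "AE \<omega> in M. \<exists>N. \<forall>n\<ge>N. active (responses Y n \<omega>) \<longrightarrow>
                        real (successes \<omega> (Suc n)) < c * real (trials \<omega> (Suc n))"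
proof (rule AE_of_vanishing_bounds)
  define eps where "eps = c - q0"
  have eps: "0 < eps"
    using c by (simp add: eps_def)
  let ?A = "\<lambda>K n. {\<omega>\<in>space M. snd (snd (upper_run K eps \<omega> n))}"
  show "?A K n \<in> sets M" for K n
    unfolding upper_run_def by (rule sets_responses_pred)
  show "?A K n \<subseteq> ?A K (Suc n)" for K n
    using upper_run_stopped_Suc by auto
  show "prob (?A K n) \<le> (2 / eps^2) / real K" if "1 \<le> K" for K n
    using prob_upper_run_stopped_le[OF that eps] by simp
  fix \<omega> K
  assume "\<omega> \<in> space M" and "\<not> (\<exists>N. \<forall>n\<ge>N. active (responses Y n \<omega>) \<longrightarrow>
                        real (successes \<omega> (Suc n)) < c * real (trials \<omega> (Suc n)))"
  then have often: "\<forall>N. \<exists>n\<ge>N. active (responses Y n \<omega>) \<and>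
                        c * real (trials \<omega> (Suc n)) \<le> real (successes \<omega> (Suc n))"
    by (auto simp: not_less)
  then obtain N where "K \<le> trials \<omega> N"
    using trials_unbounded[of \<omega> K] by blast
  moreover obtain n where "N \<le> n" "active (responses Y n \<omega>)"
    "c * real (trials \<omega> (Suc n)) \<le> real (successes \<omega> (Suc n))"
    using often by blast
  ultimately have "snd (snd (upper_run K eps \<omega> (Suc n)))"
    using trials_mono[of N "Suc n" \<omega>] by (intro upper_run_stops) (auto simp: eps_def algebra_simps)
  then show "\<exists>n. \<omega> \<in> ?A K n"
    using \<open>\<omega> \<in> space M\<close> by blast
qed

text \<open>After a warm-up of K trials the walk is followed until it leaves the strip (0, H);
  t counts the trials spent inside the strip.\<close>

definition excursion_step ::
    "nat \<Rightarrow> real \<Rightarrow> nat \<times> real \<times> phase \<times> nat \<Rightarrow> bool list \<Rightarrow> bool \<Rightarrow> nat \<times> real \<times> phase \<times> nat" where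
  "excursion_step K H s ys b = (case s of (k, D, ph, t) \<Rightarrow>
     if \<not> active ys \<or> ph = Above \<or> ph = Below then s
     else (let D' = D + increment b in
           if ph = Warmup \<and> Suc k < K then (Suc k, D', Warmup, t)
           else (Suc k, D', if D' \<le> 0 then Below else if H \<le> D' then Above else Inside,
                 if ph = Warmup then t else Suc t)))"

definition excursion_inv :: "nat \<Rightarrow> real \<Rightarrow> nat \<times> real \<times> phase \<times> nat \<Rightarrow> bool" where
  "excursion_inv K H s = (case s of (k, D, ph, t) \<Rightarrow>
     (ph = Warmup \<longrightarrow> k < K \<and> D \<le> real k \<and> t = 0) \<and> (ph = Inside \<longrightarrow> 0 < D \<and> D < H) \<and>
     (ph = Above \<longrightarrow> H \<le> D))"

definition level_potential :: "nat \<Rightarrow> nat \<times> real \<times> phase \<times> nat \<Rightarrow> real" where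
  "level_potential K s = (case s of (k, D, ph, t) \<Rightarrow> if ph = Warmup then real K + 1 else max (D + 1) 0)"

definition exit_potential :: "real \<Rightarrow> nat \<times> real \<times> phase \<times> nat \<Rightarrow> real" where
  "exit_potential H s = (case s of (k, D, ph, t) \<Rightarrow>
     if ph = Warmup then (H + 2)^2 else max (barrier_quadratic H D) 0 + q0 * (1 - q0) * real t)"

lemma excursion_inv_init: "1 \<le> K \<Longrightarrow> excursion_inv K H (0, 0, Warmup, 0)"
  by (simp add: excursion_inv_def)

lemma excursion_inv_step: "excursion_inv K H s \<Longrightarrow> excursion_inv K H (excursion_step K H s ys b)"
  using increment_bounds[of b]
  by (cases s) (auto simp: excursion_inv_def excursion_step_def Let_def)

lemma level_potential_super:
  assumes "excursion_inv K H s"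
  shows "q ys * level_potential K (excursion_step K H s ys True)
         + (1 - q ys) * level_potential K (excursion_step K H s ys False) \<le> level_potential K s"
proof -
  obtain k D ph t where s: "s = (k, D, ph, t)"
    by (cases s)
  consider "\<not> active ys \<or> ph = Above \<or> ph = Below" | "active ys" "ph = Warmup" | "active ys" "ph = Inside"
    by (cases ph) auto
  then show ?thesis
  proof cases
    case 1
    then show ?thesis
      by (auto simp: s excursion_step_def algebra_simps)
  next
    case 2
    then have "D + increment b \<le> real K" for b
      using assms increment_bounds[of b] by (auto simp: s excursion_inv_def)
    then have "level_potential K (excursion_step K H s ys b) \<le> real K + 1" for b
      using 2 by (auto simp: s excursion_step_def level_potential_def Let_def)
    then show ?thesis
      using 2 q_range by (intro convex_combination_le) (auto simp: s level_potential_def)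
  next
    case 3
    then have "0 < D"
      using assms by (auto simp: s excursion_inv_def)
    then have "level_potential K (excursion_step K H s ys b) = D + increment b + 1" for b
      using 3 increment_bounds[of b] by (auto simp: s excursion_step_def level_potential_def Let_def)
    then show ?thesis
      using 3 q_active[of ys] \<open>0 < D\<close> by (simp add: s level_potential_def increment_def algebra_simps)
  qed
qed

lemma exit_potential_super:
  assumes "excursion_inv K H s"
  shows "q ys * exit_potential H (excursion_step K H s ys True)
         + (1 - q ys) * exit_potential H (excursion_step K H s ys False) \<le> exit_potential H s"
proof -
  obtain k D ph t where s: "s = (k, D, ph, t)"
    by (cases s)
  let ?v = "q0 * (1 - q0)"
  consider "\<not> active ys \<or> ph = Above \<or> ph = Below" | "active ys" "ph = Warmup" | "active ys" "ph = Inside"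
    by (cases ph) auto
  then show ?thesis
  proof cases
    case 1
    then show ?thesis
      by (auto simp: s excursion_step_def algebra_simps)
  next
    case 2
    then have "exit_potential H (excursion_step K H s ys b) \<le> (H + 2)^2" for b
      using assms barrier_quadratic_le[of H]
      by (auto simp: s excursion_inv_def excursion_step_def exit_potential_def Let_def)
    then show ?thesis
      using 2 q_range by (intro convex_combination_le) (auto simp: s exit_potential_def)
  next
    case 3
    then have D: "0 < D" "D < H"
      using assms by (auto simp: s excursion_inv_def)
    have step: "exit_potential H (excursion_step K H s ys b)
        = barrier_quadratic H (D + increment b) + ?v * real (Suc t)" for b
      using 3 D increment_bounds[of b] barrier_quadratic_nonneg[of "D + increment b" H]
      by (auto simp: s excursion_step_def exit_potential_def Let_def)
    have "q ys * exit_potential H (excursion_step K H s ys True)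
        + (1 - q ys) * exit_potential H (excursion_step K H s ys False)
        = q0 * (barrier_quadratic H (D + (1 - q0)) + ?v * real (Suc t))
          + (1 - q0) * (barrier_quadratic H (D - q0) + ?v * real (Suc t))"
      unfolding step q_active[OF 3(1)] by (simp add: increment_def)
    also have "\<dots> = barrier_quadratic H D + ?v * real t"
      using barrier_quadratic_step[of q0 H D] by (simp add: algebra_simps)
    also have "\<dots> = exit_potential H s"
      using 3 barrier_quadratic_pos[OF D] by (simp add: s exit_potential_def)
    finally show ?thesis
      by simp
  qed
qed

definition excursion_run :: "nat \<Rightarrow> real \<Rightarrow> 'a \<Rightarrow> nat \<Rightarrow> nat \<times> real \<times> phase \<times> nat" where
  "excursion_run K H \<omega> n = run (excursion_step K H) (0, 0, Warmup, 0) (responses Y n \<omega>)"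

lemma excursion_run_Suc:
  "excursion_run K H \<omega> (Suc n) = excursion_step K H (excursion_run K H \<omega> n) (responses Y n \<omega>) (Y n \<omega>)"
  by (simp add: excursion_run_def responses_Suc run_snoc)

lemma excursion_run_persistent:
  assumes "excursion_run K H \<omega> n = (k, D, ph, t)" "excursion_run K H \<omega> (Suc n) = (k', D', ph', t')"
  shows "(ph = Above \<longrightarrow> ph' = Above) \<and> (ph \<noteq> Warmup \<longrightarrow> ph' \<noteq> Warmup \<and> t \<le> t')"
  using assms by (auto simp: excursion_run_Suc excursion_step_def Let_def split: if_splits)

definition excursion_tracks :: "nat \<Rightarrow> nat \<Rightarrow> nat \<Rightarrow> nat \<times> real \<times> phase \<times> nat \<Rightarrow> bool" where
  "excursion_tracks K T S s \<longleftrightarrow> (case s of (k, D, ph, t) \<Rightarrow>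
     ph \<noteq> Below \<and> (ph = Warmup \<longleftrightarrow> T < K) \<and> (ph = Warmup \<longrightarrow> t = 0) \<and>
     (ph \<noteq> Above \<longrightarrow> k = T \<and> D = real S - q0 * real T) \<and> (ph = Inside \<longrightarrow> t + K = k))"

lemma excursion_tracks_step:
  assumes tracks: "excursion_tracks K T S s"
    and above: "active ys \<Longrightarrow> K \<le> Suc T \<Longrightarrow> q0 * real (Suc T) < real (if b then Suc S else S)"
  shows "excursion_tracks K (if active ys then Suc T else T) (if active ys \<and> b then Suc S else S)
           (excursion_step K H s ys b)"
proof -
  obtain k D ph t where s: "s = (k, D, ph, t)"
    by (cases s)
  show ?thesis
  proof (cases "\<not> active ys \<or> ph = Above")
    case True
    with tracks show ?thesis
      by (auto simp: s excursion_tracks_def excursion_step_def)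
  next
    case False
    then have act: "active ys" and ph: "ph = Warmup \<or> ph = Inside"
      using tracks by (cases ph; auto simp: s excursion_tracks_def)+
    with tracks have k: "k = T" and D: "D = real S - q0 * real T"
      by (auto simp: s excursion_tracks_def)
    define D' where "D' = D + increment b"
    have D': "D' = real (if b then Suc S else S) - q0 * real (Suc T)"
      using D by (simp add: D'_def increment_def algebra_simps)
    show ?thesis
    proof (cases "ph = Warmup \<and> Suc k < K")
      case True
      with tracks act D show ?thesis
        by (auto simp: s k excursion_tracks_def excursion_step_def increment_def algebra_simps)
    next
      case False
      then have "K \<le> Suc T"
        using tracks ph k by (auto simp: s excursion_tracks_def)
      then have "0 < D'"
        using above act D' by simp
      moreover have "(if ph = Warmup then t else Suc t) + K = Suc k"
        using tracks ph False k by (auto simp: s excursion_tracks_def)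
      ultimately show ?thesis
        using act ph \<open>K \<le> Suc T\<close> k D'
        by (auto simp: s excursion_tracks_def excursion_step_def D'_def[symmetric] Let_def)
    qed
  qed
qed

lemma excursion_run_tracks:
  assumes K: "1 \<le> K"
    and above: "\<forall>i<n. active (responses Y i \<omega>) \<and> K \<le> trials \<omega> (Suc i) \<longrightarrow>
                       q0 * real (trials \<omega> (Suc i)) < real (successes \<omega> (Suc i))"
  shows "excursion_tracks K (trials \<omega> n) (successes \<omega> n) (excursion_run K H \<omega> n)"
  using above
proof (induction n)
  case 0
  then show ?case
    using K by (simp add: excursion_run_def excursion_tracks_def)
next
  case (Suc n)
  have "excursion_tracks K (trials \<omega> n) (successes \<omega> n) (excursion_run K H \<omega> n)"
    using Suc by simp
  moreover have "q0 * real (Suc (trials \<omega> n)) < real (if Y n \<omega> then Suc (successes \<omega> n) else successes \<omega> n)"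
    if "active (responses Y n \<omega>)" "K \<le> Suc (trials \<omega> n)"
    using Suc.prems that by (auto simp: trials_Suc successes_Suc)
  ultimately show ?case
    unfolding excursion_run_Suc trials_Suc successes_Suc by (rule excursion_tracks_step)
qed

lemma prob_excursion_above_le:
  assumes K: "1 \<le> K" and H: "0 < H"
  shows "prob {\<omega>\<in>space M. case excursion_run K H \<omega> n of (_, _, ph, _) \<Rightarrow> ph = Above} \<le> (real K + 1) / (H + 1)"
proof -
  have "prob {\<omega>\<in>space M. case excursion_run K H \<omega> n of (_, _, ph, _) \<Rightarrow> ph = Above}
      \<le> level_potential K (0, 0, Warmup, 0) / (H + 1)"
    unfolding excursion_run_def
  proof (rule prob_run_event_le[where I = "excursion_inv K H"])
    show "H + 1 \<le> level_potential K s"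
      if "excursion_inv K H s" "case s of (_, _, ph, _) \<Rightarrow> ph = Above" for s
      using that by (auto simp: excursion_inv_def level_potential_def)
    show "0 \<le> level_potential K s" for s
      by (auto simp: level_potential_def split: prod.splits)
  qed (use K H in \<open>auto simp: excursion_inv_init excursion_inv_step level_potential_super\<close>)
  then show ?thesis
    by (simp add: level_potential_def)
qed

lemma prob_excursion_long_le:
  assumes K: "1 \<le> K" and q0: "0 < q0" "q0 < 1" and T: "0 < T"
  shows "prob {\<omega>\<in>space M. case excursion_run K H \<omega> n of (_, _, ph, t) \<Rightarrow> ph \<noteq> Warmup \<and> T \<le> real t}
         \<le> (H + 2)^2 / (q0 * (1 - q0) * T)"
proof -
  have v: "0 < q0 * (1 - q0)"
    using q0 by simp
  have "prob {\<omega>\<in>space M. case excursion_run K H \<omega> n of (_, _, ph, t) \<Rightarrow> ph \<noteq> Warmup \<and> T \<le> real t}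
      \<le> exit_potential H (0, 0, Warmup, 0) / (q0 * (1 - q0) * T)"
    unfolding excursion_run_def
  proof (rule prob_run_event_le[where I = "excursion_inv K H"])
    show "q0 * (1 - q0) * T \<le> exit_potential H s"
      if "case s of (_, _, ph, t) \<Rightarrow> ph \<noteq> Warmup \<and> T \<le> real t" for s
      using that v by (auto simp: exit_potential_def intro!: add_increasing mult_left_mono)
    show "0 \<le> exit_potential H s" for s
      using v by (auto simp: exit_potential_def split: prod.splits)
  qed (use K v T in \<open>auto simp: excursion_inv_init excursion_inv_step exit_potential_super\<close>)
  then show ?thesis
    by (simp add: exit_potential_def)
qed

definition excursion_high_or_long :: "nat \<Rightarrow> nat \<Rightarrow> 'a \<Rightarrow> nat \<Rightarrow> bool" where
  "excursion_high_or_long K j \<omega> N \<longleftrightarrow> (case excursion_run K (real j) \<omega> N of (_, _, ph, t) \<Rightarrow>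
     ph = Above \<or> (ph \<noteq> Warmup \<and> j ^ 3 \<le> t))"

lemma excursion_high_or_long_Suc:
  assumes "excursion_high_or_long K j \<omega> N"
  shows "excursion_high_or_long K j \<omega> (Suc N)"
proof -
  obtain k D ph t where r: "excursion_run K (real j) \<omega> N = (k, D, ph, t)"
    by (cases "excursion_run K (real j) \<omega> N")
  obtain k' D' ph' t' where r': "excursion_run K (real j) \<omega> (Suc N) = (k', D', ph', t')"
    by (cases "excursion_run K (real j) \<omega> (Suc N)")
  show ?thesis
    using assms excursion_run_persistent[OF r r'] by (auto simp: excursion_high_or_long_def r r')
qed

lemma prob_excursion_high_or_long_le:
  assumes q0: "0 < q0" "q0 < 1" and K: "1 \<le> K" and j: "1 \<le> j"
  shows "prob {\<omega>\<in>space M. excursion_high_or_long K j \<omega> N} \<le> (real K + 1 + 9 / (q0 * (1 - q0))) / real j"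
proof -
  let ?U = "{\<omega>\<in>space M. case excursion_run K (real j) \<omega> N of (_, _, ph, _) \<Rightarrow> ph = Above}"
  let ?T = "{\<omega>\<in>space M. case excursion_run K (real j) \<omega> N of (_, _, ph, t) \<Rightarrow>
               ph \<noteq> Warmup \<and> real (j ^ 3) \<le> real t}"
  have "prob {\<omega>\<in>space M. excursion_high_or_long K j \<omega> N} = prob (?U \<union> ?T)"
    by (rule arg_cong[where f = prob]) (auto simp: excursion_high_or_long_def split: prod.splits)
  also have "\<dots> \<le> prob ?U + prob ?T"
    unfolding excursion_run_def by (intro measure_Un_le sets_responses_pred)
  also have "prob ?U \<le> (real K + 1) / real j"
    using prob_excursion_above_le[OF K, of "real j" N] j
      divide_left_mono[of "real j" "real j + 1" "real K + 1"] by simp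
  also have "prob ?T \<le> 9 / (q0 * (1 - q0)) / real j"
    using prob_excursion_long_le[OF K q0, of "real (j ^ 3)" "real j" N] shifted_square_over_cube_le[OF j, of "q0 * (1 - q0)"] j q0
    by simp
  finally show ?thesis
    by (simp add: add_divide_distrib)
qed

lemma excursion_high_or_long_if_above:
  assumes K: "1 \<le> K" and N: "K + j ^ 3 \<le> trials \<omega> N"
    and above: "\<forall>i<N. active (responses Y i \<omega>) \<and> K \<le> trials \<omega> (Suc i) \<longrightarrow>
                       q0 * real (trials \<omega> (Suc i)) < real (successes \<omega> (Suc i))"
  shows "excursion_high_or_long K j \<omega> N"
proof -
  obtain k D ph t where r: "excursion_run K (real j) \<omega> N = (k, D, ph, t)"
    by (cases "excursion_run K (real j) \<omega> N")
  with excursion_run_tracks[OF K above, of "real j"]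
  have "ph \<noteq> Below \<and> (ph = Warmup \<longleftrightarrow> trials \<omega> N < K) \<and> (ph \<noteq> Above \<longrightarrow> k = trials \<omega> N) \<and>
        (ph = Inside \<longrightarrow> t + K = k)"
    by (simp add: excursion_tracks_def)
  with N r show ?thesis
    by (cases ph) (auto simp: excursion_high_or_long_def)
qed

text \<open>Once K trials have been made, the centred walk cannot stay positive forever: it would have
  to either climb to height j (probability O(K/j), by optional stopping for D + 1) or remain in
  (0, j) for j^3 trials (probability O(1/j), since each step there consumes q0 (1 - q0) of the
  quadratic barrier potential).\<close>

theorem AE_eventually_not_above:
  assumes q0: "0 < q0" "q0 < 1" and K: "1 \<le> K"
  shows "AE \<omega> in M. (\<forall>N. \<exists>n\<ge>N. active (responses Y n \<omega>)) \<longrightarrow>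
           (\<exists>n. active (responses Y n \<omega>) \<and> K \<le> trials \<omega> (Suc n) \<and>
                real (successes \<omega> (Suc n)) \<le> q0 * real (trials \<omega> (Suc n)))"
proof (rule AE_of_vanishing_bounds[where A = "\<lambda>j N. {\<omega>\<in>space M. excursion_high_or_long K j \<omega> N}"])
  show "{\<omega>\<in>space M. excursion_high_or_long K j \<omega> N} \<in> sets M" for j N
    unfolding excursion_high_or_long_def excursion_run_def by (rule sets_responses_pred)
  show "{\<omega>\<in>space M. excursion_high_or_long K j \<omega> N} \<subseteq> {\<omega>\<in>space M. excursion_high_or_long K j \<omega> (Suc N)}"
    for j N
    using excursion_high_or_long_Suc by blast
  show "prob {\<omega>\<in>space M. excursion_high_or_long K j \<omega> N} \<le> (real K + 1 + 9 / (q0 * (1 - q0))) / real j"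
    if "1 \<le> j" for j N
    using q0 K that by (rule prob_excursion_high_or_long_le)
  fix \<omega> j
  assume \<omega>: "\<omega> \<in> space M" and not_recurrent: "\<not> ((\<forall>N. \<exists>n\<ge>N. active (responses Y n \<omega>)) \<longrightarrow>
           (\<exists>n. active (responses Y n \<omega>) \<and> K \<le> trials \<omega> (Suc n) \<and>
                real (successes \<omega> (Suc n)) \<le> q0 * real (trials \<omega> (Suc n))))"
  then obtain N where "K + j ^ 3 \<le> trials \<omega> N"
    using trials_unbounded by blast
  moreover have "\<forall>i<N. active (responses Y i \<omega>) \<and> K \<le> trials \<omega> (Suc i) \<longrightarrow>
          q0 * real (trials \<omega> (Suc i)) < real (successes \<omega> (Suc i))"
    using not_recurrent by (auto simp: not_le)
  ultimately show "\<exists>N. \<omega> \<in> {\<omega>\<in>space M. excursion_high_or_long K j \<omega> N}"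
    using \<omega> K excursion_high_or_long_if_above by blast
qed

lemma AE_successes_zero:
  assumes "q0 = 0"
  shows "AE \<omega> in M. \<forall>n. successes \<omega> n = 0"
proof -
  define upd where "upd s ys b = (s \<or> (active ys \<and> b))" for s :: bool and ys and b :: bool
  have run_upd: "run upd False ys = (0 < count_successes ys)" for ys
    by (induction ys rule: rev_induct) (auto simp: run_snoc count_successes_snoc upd_def)
  have "AE \<omega> in M. \<not> run upd False (responses Y n \<omega>)" for n
  proof (rule AE_I')
    have "prob {\<omega>\<in>space M. run upd False (responses Y n \<omega>)} \<le> (if False then 1 else 0) / 1"
    proof (rule prob_run_event_le[where I = "\<lambda>_. True" and g = "\<lambda>s. if s then 1 else 0"])
      show "q ys * (if upd s ys True then 1 else 0) + (1 - q ys) * (if upd s ys False then 1 else 0)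
          \<le> (if s then 1 else 0 :: real)" for s ys
        using q_active[of ys] assms by (auto simp: upd_def)
    qed auto
    then have "prob {\<omega>\<in>space M. run upd False (responses Y n \<omega>)} = 0"
      using measure_nonneg[of M] by (simp add: antisym)
    then show "{\<omega>\<in>space M. run upd False (responses Y n \<omega>)} \<in> null_sets M"
      using sets_responses_pred[of "run upd False" n] by (intro null_setsI) (simp_all add: emeasure_eq_measure)
  qed simp
  then have "AE \<omega> in M. \<forall>n. \<not> run upd False (responses Y n \<omega>)"
    by (simp add: AE_all_countable)
  then show ?thesis
    by eventually_elim (simp add: run_upd)
qed

theorem AE_frequently_rate_le:
  "AE \<omega> in M. (\<forall>N. \<exists>n\<ge>N. active (responses Y n \<omega>)) \<longrightarrow>
      (\<forall>N. \<exists>n\<ge>N. active (responses Y n \<omega>) \<and> real (successes \<omega> (Suc n)) \<le> q0 * real (trials \<omega> (Suc n)))"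
proof -
  consider "q0 = 1" | "q0 = 0" | "0 < q0" "q0 < 1"
    using q0_range by linarith
  then show ?thesis
  proof cases
    case 1
    then show ?thesis
      using count_successes_le_trials by (auto intro!: AE_I2)
  next
    case 2
    from AE_successes_zero[OF 2] show ?thesis
      by eventually_elim (use 2 in auto)
  next
    case 3
    have "AE \<omega> in M. \<forall>K. (\<forall>N. \<exists>n\<ge>N. active (responses Y n \<omega>)) \<longrightarrow>
           (\<exists>n. active (responses Y n \<omega>) \<and> Suc K \<le> trials \<omega> (Suc n) \<and>
                real (successes \<omega> (Suc n)) \<le> q0 * real (trials \<omega> (Suc n)))"
      unfolding AE_all_countable using AE_eventually_not_above[OF 3] by simp
    then show ?thesis
    proof eventually_elim
      case (elim \<omega>)
      show ?case
      proof (intro impI allI)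
        fix N
        assume "\<forall>N. \<exists>n\<ge>N. active (responses Y n \<omega>)"
        then obtain n where "active (responses Y n \<omega>)" "Suc (trials \<omega> N) \<le> trials \<omega> (Suc n)"
          "real (successes \<omega> (Suc n)) \<le> q0 * real (trials \<omega> (Suc n))"
          using elim by blast
        moreover have "N \<le> n"
          using trials_mono[of "Suc n" N \<omega>] \<open>Suc (trials \<omega> N) \<le> trials \<omega> (Suc n)\<close> by linarith
        ultimately show "\<exists>n\<ge>N. active (responses Y n \<omega>) \<and>
            real (successes \<omega> (Suc n)) \<le> q0 * real (trials \<omega> (Suc n))"
          by blast
      qed
    qed
  qed
qed

lemma complement_subsequence:
  "bernoulli_subsequence M (\<lambda>i \<omega>. \<not> Y i \<omega>) (\<lambda>ys. 1 - q (map Not ys)) (\<lambda>ys. active (map Not ys)) (1 - q0)"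
proof unfold_locales
  show "(\<lambda>\<omega>. \<not> Y i \<omega>) \<in> measurable M (count_space UNIV)" for i
    using measurable_Y[of i] by simp
  show "0 \<le> 1 - q (map Not ys) \<and> 1 - q (map Not ys) \<le> 1" for ys
    using q_range[of "map Not ys"] by simp
  fix ys :: "bool list"
  let ?zs = "map Not ys"
  let ?Z = "{\<omega>\<in>space M. responses Y (length ?zs) \<omega> = ?zs}"
  let ?T = "{\<omega>\<in>space M. responses Y (length ?zs) \<omega> = ?zs \<and> Y (length ?zs) \<omega>}"
  have Z: "{\<omega>\<in>space M. responses (\<lambda>i \<omega>. \<not> Y i \<omega>) (length ys) \<omega> = ys} = ?Z"
    by (auto simp: responses_Not map_Not_eq_iff)
  have "prob {\<omega>\<in>space M. responses (\<lambda>i \<omega>. \<not> Y i \<omega>) (length ys) \<omega> = ys \<and> \<not> Y (length ys) \<omega>}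
      = prob (?Z - ?T)"
    by (rule arg_cong[where f = prob]) (auto simp: responses_Not map_Not_eq_iff)
  also have "\<dots> = prob ?Z - q ?zs * prob ?Z"
    using sets_responses_pred[of "\<lambda>xs. xs = ?zs" "length ?zs"] sets_Y_eq[of "length ?zs" True]
      sets_responses_eq prob_next_True[of ?zs]
    by (subst finite_measure_Diff) (auto simp: Collect_conj_eq[symmetric] Int_def)
  finally show "prob {\<omega>\<in>space M. responses (\<lambda>i \<omega>. \<not> Y i \<omega>) (length ys) \<omega> = ys \<and> \<not> Y (length ys) \<omega>}
      = (1 - q (map Not ys)) * prob {\<omega>\<in>space M. responses (\<lambda>i \<omega>. \<not> Y i \<omega>) (length ys) \<omega> = ys}"
    unfolding Z by (simp add: algebra_simps)
qed (use q_active q0_range in auto)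

lemma complement_counts:
  "bernoulli_subsequence.count_trials (\<lambda>ys. active (map Not ys)) (responses (\<lambda>i \<omega>. \<not> Y i \<omega>) n \<omega>)
     = trials \<omega> n"
  "real (bernoulli_subsequence.count_successes (\<lambda>ys. active (map Not ys)) (responses (\<lambda>i \<omega>. \<not> Y i \<omega>) n \<omega>))
     = real (trials \<omega> n) - real (successes \<omega> n)"
proof -
  interpret C: bernoulli_subsequence M "\<lambda>i \<omega>. \<not> Y i \<omega>" "\<lambda>ys. 1 - q (map Not ys)"
      "\<lambda>ys. active (map Not ys)" "1 - q0"
    by (rule complement_subsequence)
  have "C.count_trials (map Not ys) = count_trials ys" for ys
    by (induction ys rule: rev_induct) (simp_all add: C.count_trials_snoc count_trials_snoc comp_def)
  moreover have "C.count_successes (map Not ys) = count_trials ys - count_successes ys" for ys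
    using count_successes_le_trials
    by (induction ys rule: rev_induct)
      (auto simp: C.count_successes_snoc count_successes_snoc count_trials_snoc comp_def Suc_diff_le)
  ultimately show "C.trials \<omega> n = trials \<omega> n" "real (C.successes \<omega> n) = real (trials \<omega> n) - real (successes \<omega> n)"
    using count_successes_le_trials by (simp_all add: responses_Not of_nat_diff)
qed

lemma complement_active: "active (map Not (responses (\<lambda>i \<omega>. \<not> Y i \<omega>) n \<omega>)) = active (responses Y n \<omega>)"
  by (simp add: responses_Not comp_def)

theorem AE_eventually_rate_above:
  assumes "c < q0"
  shows "AE \<omega> in M. \<exists>N. \<forall>n\<ge>N. active (responses Y n \<omega>) \<longrightarrow>
                        c * real (trials \<omega> (Suc n)) < real (successes \<omega> (Suc n))"
proof -
  interpret C: bernoulli_subsequence M "\<lambda>i \<omega>. \<not> Y i \<omega>" "\<lambda>ys. 1 - q (map Not ys)"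
      "\<lambda>ys. active (map Not ys)" "1 - q0"
    by (rule complement_subsequence)
  have "1 - q0 < 1 - c"
    using assms by simp
  from C.AE_eventually_rate_below[OF this] show ?thesis
    by eventually_elim (simp add: complement_active complement_counts algebra_simps)
qed

theorem AE_frequently_rate_ge:
  "AE \<omega> in M. (\<forall>N. \<exists>n\<ge>N. active (responses Y n \<omega>)) \<longrightarrow>
      (\<forall>N. \<exists>n\<ge>N. active (responses Y n \<omega>) \<and> q0 * real (trials \<omega> (Suc n)) \<le> real (successes \<omega> (Suc n)))"
proof -
  interpret C: bernoulli_subsequence M "\<lambda>i \<omega>. \<not> Y i \<omega>" "\<lambda>ys. 1 - q (map Not ys)"
      "\<lambda>ys. active (map Not ys)" "1 - q0"
    by (rule complement_subsequence)
  from C.AE_frequently_rate_le show ?thesis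
    by eventually_elim (simp add: complement_active complement_counts algebra_simps)
qed

end

section \<open>The allocation walk on a good sample path\<close>

locale interval_dynamics =
  fixes x :: "nat \<Rightarrow> nat" and e :: "nat \<Rightarrow> real" and m :: nat and lo hi :: real and f :: "nat \<Rightarrow> real"
  assumes m_pos: "1 \<le> m" and x_0: "x 0 < m" and lo_hi: "lo < hi"
    and x_Suc: "\<And>n. x (Suc n) = (if e n \<le> lo then (if x n + 1 < m then x n + 1 else m - 1)
                   else if hi \<le> e n then (if x n = 0 then 0 else x n - 1) else x n)"
    and f_mono: "\<And>i j. i < j \<Longrightarrow> j < m \<Longrightarrow> f i < f j"
    and eventually_est_less: "\<And>u c. u < m \<Longrightarrow> c \<in> {lo, hi} \<Longrightarrow> f u < c \<Longrightarrow>
                               \<exists>N. \<forall>n\<ge>N. x n = u \<longrightarrow> e n < c"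
    and eventually_est_greater: "\<And>u c. u < m \<Longrightarrow> c \<in> {lo, hi} \<Longrightarrow> c < f u \<Longrightarrow>
                               \<exists>N. \<forall>n\<ge>N. x n = u \<longrightarrow> c < e n"
    and frequently_est_le: "\<And>u c. u < m \<Longrightarrow> c \<in> {lo, hi} \<Longrightarrow> f u = c \<Longrightarrow> (\<forall>N. \<exists>n\<ge>N. x n = u) \<Longrightarrow>
                               \<forall>N. \<exists>n\<ge>N. x n = u \<and> e n \<le> c"
    and frequently_est_ge: "\<And>u c. u < m \<Longrightarrow> c \<in> {lo, hi} \<Longrightarrow> f u = c \<Longrightarrow> (\<forall>N. \<exists>n\<ge>N. x n = u) \<Longrightarrow>
                               \<forall>N. \<exists>n\<ge>N. x n = u \<and> c \<le> e n"
begin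

definition recurrent :: "nat \<Rightarrow> bool" where
  "recurrent u \<longleftrightarrow> (\<forall>N. \<exists>n\<ge>N. x n = u)"

lemma x_less: "x n < m"
  using x_0 m_pos by (induction n) (auto simp: x_Suc)

lemma x_Suc_bounds: "x (Suc n) \<le> x n + 1" "x n \<le> x (Suc n) + 1"
  using x_less[of n] by (auto simp: x_Suc)

lemma f_le_mono: "i \<le> j \<Longrightarrow> j < m \<Longrightarrow> f i \<le> f j"
  using f_mono[of i j] by (cases "i = j") auto

lemma recurrent_less: "recurrent u \<Longrightarrow> u < m"
  using x_less unfolding recurrent_def by blast

lemma eventually_in:
  assumes "\<And>u. u < m \<Longrightarrow> u \<notin> S \<Longrightarrow> \<not> recurrent u"
  shows "\<exists>N. \<forall>n\<ge>N. x n \<in> S"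
proof -
  have "\<forall>u. \<exists>N. u < m \<and> u \<notin> S \<longrightarrow> (\<forall>n\<ge>N. x n \<noteq> u)"
    using assms unfolding recurrent_def by blast
  then obtain Nu where Nu: "\<And>u n. u < m \<Longrightarrow> u \<notin> S \<Longrightarrow> Nu u \<le> n \<Longrightarrow> x n \<noteq> u"
    by metis
  have "x n \<in> S" if "(\<Sum>u<m. Nu u) \<le> n" for n
  proof (rule ccontr)
    assume "x n \<notin> S"
    moreover have "Nu (x n) \<le> (\<Sum>u<m. Nu u)"
      using x_less[of n] by (intro member_le_sum) auto
    ultimately show False
      using Nu[OF x_less, of n n] that by linarith
  qed
  then show ?thesis
    by blast
qed

lemma recurrent_exists: "\<exists>u<m. recurrent u"
  using eventually_in[of "{}"] by auto

lemma not_recurrent_if_eventually_not_entered: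
  assumes "\<forall>n\<ge>N. x (Suc n) \<noteq> a"
  shows "\<not> recurrent a"
proof
  assume "recurrent a"
  then obtain n where "Suc N \<le> n" "x n = a"
    unfolding recurrent_def by blast
  with assms show False
    by (cases n) auto
qed

lemma frequently_moves_up:
  assumes u: "recurrent u" "f u \<le> lo"
  shows "\<forall>N. \<exists>n\<ge>N. x n = u \<and> e n \<le> lo"
proof (cases "f u = lo")
  case True
  then show ?thesis
    using frequently_est_le[of u lo] u recurrent_less unfolding recurrent_def by auto
next
  case False
  then obtain N0 where N0: "\<forall>n\<ge>N0. x n = u \<longrightarrow> e n < lo"
    using eventually_est_less[of u lo] u recurrent_less by auto
  show ?thesis
  proof
    fix N
    obtain n where "max N N0 \<le> n" "x n = u"
      using u unfolding recurrent_def by blast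
    with N0 show "\<exists>n\<ge>N. x n = u \<and> e n \<le> lo"
      by (intro exI[of _ n]) auto
  qed
qed

lemma frequently_moves_down:
  assumes u: "recurrent u" "hi \<le> f u"
  shows "\<forall>N. \<exists>n\<ge>N. x n = u \<and> hi \<le> e n"
proof (cases "f u = hi")
  case True
  then show ?thesis
    using frequently_est_ge[of u hi] u recurrent_less unfolding recurrent_def by auto
next
  case False
  then obtain N0 where N0: "\<forall>n\<ge>N0. x n = u \<longrightarrow> hi < e n"
    using eventually_est_greater[of u hi] u recurrent_less by auto
  show ?thesis
  proof
    fix N
    obtain n where "max N N0 \<le> n" "x n = u"
      using u unfolding recurrent_def by blast
    with N0 show "\<exists>n\<ge>N. x n = u \<and> hi \<le> e n"
      by (intro exI[of _ n]) auto
  qed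
qed

lemma recurrent_Suc:
  assumes "recurrent u" "f u \<le> lo" "u + 1 < m"
  shows "recurrent (u + 1)"
  unfolding recurrent_def
proof
  fix N
  obtain n where "N \<le> n" "x n = u" "e n \<le> lo"
    using frequently_moves_up[OF assms(1,2)] by blast
  with assms(3) show "\<exists>n\<ge>N. x n = u + 1"
    by (intro exI[of _ "Suc n"]) (simp add: x_Suc)
qed

lemma recurrent_pred:
  assumes "recurrent u" "hi \<le> f u" "0 < u"
  shows "recurrent (u - 1)"
  unfolding recurrent_def
proof
  fix N
  obtain n where "N \<le> n" "x n = u" "hi \<le> e n"
    using frequently_moves_down[OF assms(1,2)] by blast
  with assms(3) lo_hi show "\<exists>n\<ge>N. x n = u - 1"
    by (intro exI[of _ "Suc n"]) (simp add: x_Suc)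
qed

lemma absorbed_if_recurrent_inside:
  assumes v: "recurrent v" "lo < f v" "f v < hi"
  shows "\<exists>N. \<forall>n\<ge>N. x n = v"
proof -
  obtain N1 where N1: "\<forall>n\<ge>N1. x n = v \<longrightarrow> lo < e n"
    using eventually_est_greater[of v lo] v recurrent_less by auto
  obtain N2 where N2: "\<forall>n\<ge>N2. x n = v \<longrightarrow> e n < hi"
    using eventually_est_less[of v hi] v recurrent_less by auto
  obtain n0 where n0: "max N1 N2 \<le> n0" "x n0 = v"
    using v unfolding recurrent_def by blast
  have "x n = v" if "n0 \<le> n" for n
    using that
  proof (induction n rule: dec_induct)
    case (step n)
    then have "lo < e n" "e n < hi"
      using N1 N2 n0 by auto
    with step show ?case
      by (simp add: x_Suc)
  qed (use n0 in simp)
  then show ?thesis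
    by blast
qed

lemma not_recurrent_drift_up:
  assumes a: "a + 1 < m" "f a < lo" "f (a + 1) < hi" and below: "0 < a \<Longrightarrow> \<not> recurrent (a - 1)"
  shows "\<not> recurrent a"
proof -
  obtain N1 where N1: "\<forall>n\<ge>N1. x n = a \<longrightarrow> e n < lo"
    using eventually_est_less[of a lo] a by auto
  obtain N2 where N2: "\<forall>n\<ge>N2. x n = a + 1 \<longrightarrow> e n < hi"
    using eventually_est_less[of "a + 1" hi] a by auto
  obtain N3 where N3: "\<forall>n\<ge>N3. 0 < a \<longrightarrow> x n \<noteq> a - 1"
    using below unfolding recurrent_def by (cases "0 < a") auto
  have "x (Suc n) \<noteq> a" if "max N1 (max N2 N3) \<le> n" for n
  proof -
    have "x n = a \<Longrightarrow> x (Suc n) = a + 1" "x n = a + 1 \<Longrightarrow> a + 1 \<le> x (Suc n)"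
      using that N1 N2 a x_less[of n] by (auto simp: x_Suc)
    moreover have "0 < a \<Longrightarrow> x n \<noteq> a - 1"
      using that N3 by auto
    ultimately show ?thesis
      using x_Suc_bounds[of n] by (cases "x n = a \<or> x n = a + 1") auto
  qed
  then show ?thesis
    by (intro not_recurrent_if_eventually_not_entered) blast
qed

lemma not_recurrent_drift_down:
  assumes b: "0 < b" "b < m" "hi < f b" "lo < f (b - 1)" and above: "b + 1 < m \<Longrightarrow> \<not> recurrent (b + 1)"
  shows "\<not> recurrent b"
proof -
  obtain N1 where N1: "\<forall>n\<ge>N1. x n = b \<longrightarrow> hi < e n"
    using eventually_est_greater[of b hi] b by auto
  obtain N2 where N2: "\<forall>n\<ge>N2. x n = b - 1 \<longrightarrow> lo < e n"
    using eventually_est_greater[of "b - 1" lo] b by (meson insertCI less_imp_diff_less)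
  have "\<exists>N3. \<forall>n\<ge>N3. x n \<noteq> b + 1"
  proof (cases "b + 1 < m")
    case False
    then have "x n \<noteq> b + 1" for n
      using x_less[of n] by linarith
    then show ?thesis
      by blast
  qed (use above in \<open>auto simp: recurrent_def\<close>)
  then obtain N3 where N3: "\<forall>n\<ge>N3. x n \<noteq> b + 1"
    by blast
  have "x (Suc n) \<noteq> b" if "max N1 (max N2 N3) \<le> n" for n
  proof -
    have "x n = b \<Longrightarrow> x (Suc n) = b - 1" "x n = b - 1 \<Longrightarrow> x (Suc n) \<le> b - 1"
      using that N1 N2 b lo_hi x_less[of n] by (auto simp: x_Suc)
    moreover have "x n \<noteq> b + 1"
      using that N3 by auto
    ultimately show ?thesis
      using x_Suc_bounds[of n] b by (cases "x n = b \<or> x n = b - 1") auto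
  qed
  then show ?thesis
    by (intro not_recurrent_if_eventually_not_entered) blast
qed

lemma not_recurrent_below:
  assumes j: "j + 1 < m" "f j \<le> lo" and u: "u < j"
  shows "\<not> recurrent u"
  using u
proof (induction u rule: less_induct)
  case (less u)
  show ?case
  proof (rule not_recurrent_drift_up)
    show "u + 1 < m"
      using less.prems j by simp
    show "f u < lo"
      using f_mono[of u j] less.prems j by simp
    show "f (u + 1) < hi"
      using f_le_mono[of "u + 1" j] less.prems j lo_hi by simp
    show "\<not> recurrent (u - 1)" if "0 < u"
      using less.IH[of "u - 1"] less.prems that by simp
  qed
qed

lemma not_recurrent_above:
  assumes j: "hi \<le> f (j + 1)" and u: "j + 1 < u" "u < m"
  shows "\<not> recurrent u"
  using u
proof (induction "m - u" arbitrary: u rule: less_induct)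
  case less
  show ?case
  proof (rule not_recurrent_drift_down)
    show "0 < u" "u < m"
      using less.prems by simp_all
    show "hi < f u"
      using f_mono[of "j + 1" u] less.prems j by simp
    have "f (j + 1) \<le> f (u - 1)"
      using f_le_mono[of "j + 1" "u - 1"] less.prems by simp
    then show "lo < f (u - 1)"
      using j lo_hi by simp
    show "\<not> recurrent (u + 1)" if "u + 1 < m"
      using less.hyps[of "u + 1"] less.prems that by simp
  qed
qed

theorem oscillation:
  assumes j: "j + 1 < m" "f j \<le> lo" "hi \<le> f (j + 1)"
  shows "(\<exists>N. \<forall>n\<ge>N. x n \<in> {j, j + 1}) \<and> recurrent j \<and> recurrent (j + 1)"
proof -
  have outside: "\<not> recurrent u" if "u < m" "u \<notin> {j, j + 1}" for u
    using that j not_recurrent_below[of j u] not_recurrent_above[of j u] by (cases "u < j") auto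
  obtain u where "u < m" "recurrent u"
    using recurrent_exists by blast
  with outside have "recurrent j \<or> recurrent (j + 1)"
    by blast
  then have "recurrent j \<and> recurrent (j + 1)"
    using recurrent_Suc[of j] recurrent_pred[of "j + 1"] j by auto
  moreover have "\<exists>N. \<forall>n\<ge>N. x n \<in> {j, j + 1}"
    using outside by (rule eventually_in)
  ultimately show ?thesis
    by blast
qed

lemma recurrent_climb_up:
  assumes "recurrent u" "u \<le> v" "v < m" "\<And>w. u \<le> w \<Longrightarrow> w < v \<Longrightarrow> recurrent w \<Longrightarrow> f w \<le> lo"
  shows "recurrent v"
  using assms(2,3,1,4)
proof (induction v rule: dec_induct)
  case (step w)
  then show ?case
    using recurrent_Suc[of w] by simp
qed

lemma recurrent_climb_down:
  assumes "recurrent u" "v \<le> u" "u < m" "\<And>w. v < w \<Longrightarrow> w \<le> u \<Longrightarrow> recurrent w \<Longrightarrow> hi \<le> f w"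
  shows "recurrent v"
  using assms(2,3,1,4)
proof (induction v rule: inc_induct)
  case (step w)
  then show ?case
    using recurrent_pred[of "Suc w"] by simp
qed

lemma recurrent_target_exists:
  assumes v0: "v0 < m" "lo < f v0" "f v0 < hi"
  shows "\<exists>v. recurrent v \<and> lo < f v \<and> f v < hi"
proof (rule ccontr)
  assume none: "\<not> (\<exists>v. recurrent v \<and> lo < f v \<and> f v < hi)"
  obtain u where u: "recurrent u"
    using recurrent_exists by blast
  have "recurrent v0"
  proof (cases "u \<le> v0")
    case True
    have "f w \<le> lo" if "w < v0" "recurrent w" for w
      using none that f_mono[of w v0] v0 by fastforce
    with u True v0 show ?thesis
      by (auto intro: recurrent_climb_up[of u v0])
  next
    case False
    have "hi \<le> f w" if "v0 < w" "recurrent w" for w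
      using none that f_mono[of v0 w] v0 recurrent_less[of w] by fastforce
    with u False recurrent_less[of u] show ?thesis
      by (auto intro: recurrent_climb_down[of u v0])
  qed
  with none v0 show False
    by blast
qed

theorem absorption:
  assumes "v0 < m" "lo < f v0" "f v0 < hi"
  shows "\<exists>v<m. lo < f v \<and> f v < hi \<and> (\<exists>N. \<forall>n\<ge>N. x n = v)"
  using recurrent_target_exists[OF assms] absorbed_if_recurrent_inside recurrent_less by blast

end

section \<open>The interval design\<close>

lemma length_allocs [simp]: "length (allocs m p dp1 dp2 x0 y n) = Suc n"
  by (induction n) auto

lemma allocs_nth: "i \<le> n \<Longrightarrow> allocs m p dp1 dp2 x0 y n ! i = alloc m p dp1 dp2 x0 y i"
  by (induction n rule: dec_induct) (auto simp: alloc_def nth_append)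

lemma last_allocs: "last (allocs m p dp1 dp2 x0 y n) = alloc m p dp1 dp2 x0 y n"
  by (cases n) (simp_all add: alloc_def nth_append)

lemma alloc_0: "alloc m p dp1 dp2 x0 y 0 = x0"
  by (simp add: alloc_def)

lemma alloc_Suc: "alloc m p dp1 dp2 x0 y (Suc n) = next_dose m p dp1 dp2 (allocs m p dp1 dp2 x0 y n) y"
  by (simp add: alloc_def nth_append)

lemma allocs_cong: "(\<And>i. i < n \<Longrightarrow> y i = y' i) \<Longrightarrow> allocs m p dp1 dp2 x0 y n = allocs m p dp1 dp2 x0 y' n"
proof (induction n)
  case (Suc n)
  then have "allocs m p dp1 dp2 x0 y n = allocs m p dp1 dp2 x0 y' n"
    by simp
  moreover have "tox_freq (allocs m p dp1 dp2 x0 y n) y u = tox_freq (allocs m p dp1 dp2 x0 y n) y' u" for u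
    unfolding tox_freq_def using Suc.prems by (intro arg_cong2[where f = "(/)"] arg_cong[where f = real] arg_cong[where f = card]) auto
  ultimately show ?case
    by (simp add: next_dose_def Let_def)
qed simp

lemma alloc_cong: "(\<And>i. i < n \<Longrightarrow> y i = y' i) \<Longrightarrow> alloc m p dp1 dp2 x0 y n = alloc m p dp1 dp2 x0 y' n"
  unfolding alloc_def using allocs_cong by metis

lemma tox_freq_allocs:
  "tox_freq (allocs m p dp1 dp2 x0 y n) y u =
     real (card {i. i < Suc n \<and> alloc m p dp1 dp2 x0 y i = u \<and> y i})
     / real (card {i. i < Suc n \<and> alloc m p dp1 dp2 x0 y i = u})"
proof -
  have "{i. i < Suc n \<and> allocs m p dp1 dp2 x0 y n ! i = u \<and> y i} = {i. i < Suc n \<and> alloc m p dp1 dp2 x0 y i = u \<and> y i}"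
    "{i. i < Suc n \<and> allocs m p dp1 dp2 x0 y n ! i = u} = {i. i < Suc n \<and> alloc m p dp1 dp2 x0 y i = u}"
    by (auto simp: allocs_nth)
  then show ?thesis
    unfolding tox_freq_def by simp
qed

locale interval_design = prob_space M for M :: "'a measure" +
  fixes Y :: "nat \<Rightarrow> 'a \<Rightarrow> bool" and F :: "real \<Rightarrow> real" and d :: "nat \<Rightarrow> real"
    and m x0 :: nat and p dp1 dp2 :: real
  assumes F_range: "\<And>x. 0 \<le> F x \<and> F x \<le> 1"
    and Y_meas: "\<And>i. Y i \<in> measurable M (count_space UNIV)"
    and Y_law: "\<And>n (ys :: nat \<Rightarrow> bool).
       measure M {\<omega> \<in> space M. (\<forall>i<n. Y i \<omega> = ys i) \<and> Y n \<omega>}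
       = F (d (alloc m p dp1 dp2 x0 ys n)) * measure M {\<omega> \<in> space M. \<forall>i<n. Y i \<omega> = ys i}"
begin

definition toxicity_prob :: "bool list \<Rightarrow> real" where
  "toxicity_prob ys = F (d (alloc m p dp1 dp2 x0 (\<lambda>i. ys ! i) (length ys)))"

definition allocated :: "nat \<Rightarrow> bool list \<Rightarrow> bool" where
  "allocated u ys \<longleftrightarrow> alloc m p dp1 dp2 x0 (\<lambda>i. ys ! i) (length ys) = u"

definition X :: "'a \<Rightarrow> nat \<Rightarrow> nat" where
  "X \<omega> n = alloc m p dp1 dp2 x0 (\<lambda>k. Y k \<omega>) n"

definition estimate :: "'a \<Rightarrow> nat \<Rightarrow> real" where
  "estimate \<omega> n = tox_freq (allocs m p dp1 dp2 x0 (\<lambda>k. Y k \<omega>) n) (\<lambda>k. Y k \<omega>) (X \<omega> n)"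

lemma X_0: "X \<omega> 0 = x0"
  by (simp add: X_def alloc_0)

lemma X_Suc: "X \<omega> (Suc n) = (if estimate \<omega> n \<le> p - dp1 then (if X \<omega> n + 1 < m then X \<omega> n + 1 else m - 1)
                 else if p + dp2 \<le> estimate \<omega> n then (if X \<omega> n = 0 then 0 else X \<omega> n - 1) else X \<omega> n)"
  unfolding X_def estimate_def alloc_Suc next_dose_def Let_def last_allocs by simp

lemma dose_subsequence: "bernoulli_subsequence M Y toxicity_prob (allocated u) (F (d u))"
proof unfold_locales
  fix ys :: "bool list"
  have "{\<omega>\<in>space M. responses Y (length ys) \<omega> = ys \<and> Y (length ys) \<omega>}
      = {\<omega>\<in>space M. (\<forall>i<length ys. Y i \<omega> = ys ! i) \<and> Y (length ys) \<omega>}"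
    "{\<omega>\<in>space M. responses Y (length ys) \<omega> = ys} = {\<omega>\<in>space M. \<forall>i<length ys. Y i \<omega> = ys ! i}"
    by (auto simp: responses_eq_iff)
  then show "prob {\<omega>\<in>space M. responses Y (length ys) \<omega> = ys \<and> Y (length ys) \<omega>}
      = toxicity_prob ys * prob {\<omega>\<in>space M. responses Y (length ys) \<omega> = ys}"
    using Y_law[of "length ys" "\<lambda>i. ys ! i"] by (simp add: toxicity_prob_def)
qed (use Y_meas F_range in \<open>auto simp: toxicity_prob_def allocated_def\<close>)

lemma allocated_responses: "allocated u (responses Y n \<omega>) \<longleftrightarrow> X \<omega> n = u"
proof -
  have "alloc m p dp1 dp2 x0 (\<lambda>i. responses Y n \<omega> ! i) n = X \<omega> n"
    unfolding X_def by (rule alloc_cong) simp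
  then show ?thesis
    by (simp add: allocated_def)
qed

end

locale interval_design_dose = interval_design + fixes u :: nat
begin

sublocale dose: bernoulli_subsequence M Y toxicity_prob "allocated u" "F (d u)"
  by (rule dose_subsequence)

lemma estimate_eq_rate:
  assumes "X \<omega> n = u"
  shows "estimate \<omega> n = real (dose.successes \<omega> (Suc n)) / real (dose.trials \<omega> (Suc n))"
proof -
  have card_Suc: "card {i. i < Suc k \<and> P i} = (if P k then Suc (card {i. i < k \<and> P i}) else card {i. i < k \<and> P i})"
    for k and P :: "nat \<Rightarrow> bool"
  proof -
    have "{i. i < Suc k \<and> P i} = {i. i < k \<and> P i} \<union> (if P k then {k} else {})"
      by (auto simp: less_Suc_eq)
    then show ?thesis
      by auto
  qed
  have "dose.trials \<omega> k = card {i. i < k \<and> X \<omega> i = u} \<and>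
        dose.successes \<omega> k = card {i. i < k \<and> X \<omega> i = u \<and> Y i \<omega>}" for k
    by (induction k) (simp_all add: dose.trials_Suc dose.successes_Suc allocated_responses card_Suc)
  with assms show ?thesis
    unfolding estimate_def tox_freq_allocs by (simp add: X_def)
qed

lemma estimate_compare_iff:
  assumes "X \<omega> n = u"
  shows "estimate \<omega> n < c \<longleftrightarrow> real (dose.successes \<omega> (Suc n)) < c * real (dose.trials \<omega> (Suc n))"
    and "c < estimate \<omega> n \<longleftrightarrow> c * real (dose.trials \<omega> (Suc n)) < real (dose.successes \<omega> (Suc n))"
    and "estimate \<omega> n \<le> c \<longleftrightarrow> real (dose.successes \<omega> (Suc n)) \<le> c * real (dose.trials \<omega> (Suc n))"
    and "c \<le> estimate \<omega> n \<longleftrightarrow> c * real (dose.trials \<omega> (Suc n)) \<le> real (dose.successes \<omega> (Suc n))"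
proof -
  have "0 < real (dose.trials \<omega> (Suc n))"
    using assms by (simp add: dose.trials_Suc allocated_responses)
  with estimate_eq_rate[OF assms] show
    "estimate \<omega> n < c \<longleftrightarrow> real (dose.successes \<omega> (Suc n)) < c * real (dose.trials \<omega> (Suc n))"
    "c < estimate \<omega> n \<longleftrightarrow> c * real (dose.trials \<omega> (Suc n)) < real (dose.successes \<omega> (Suc n))"
    "estimate \<omega> n \<le> c \<longleftrightarrow> real (dose.successes \<omega> (Suc n)) \<le> c * real (dose.trials \<omega> (Suc n))"
    "c \<le> estimate \<omega> n \<longleftrightarrow> c * real (dose.trials \<omega> (Suc n)) \<le> real (dose.successes \<omega> (Suc n))"
    by (simp_all add: divide_less_eq less_divide_eq divide_le_eq le_divide_eq)
qed

lemma AE_eventually_estimate_less: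
  assumes "F (d u) < c"
  shows "AE \<omega> in M. \<exists>N. \<forall>n\<ge>N. X \<omega> n = u \<longrightarrow> estimate \<omega> n < c"
  using dose.AE_eventually_rate_below[OF assms]
  by eventually_elim (auto simp: allocated_responses estimate_compare_iff)

lemma AE_eventually_estimate_greater:
  assumes "c < F (d u)"
  shows "AE \<omega> in M. \<exists>N. \<forall>n\<ge>N. X \<omega> n = u \<longrightarrow> c < estimate \<omega> n"
  using dose.AE_eventually_rate_above[OF assms]
  by eventually_elim (auto simp: allocated_responses estimate_compare_iff)

lemma AE_frequently_estimate_le:
  "AE \<omega> in M. (\<forall>N. \<exists>n\<ge>N. X \<omega> n = u) \<longrightarrow> (\<forall>N. \<exists>n\<ge>N. X \<omega> n = u \<and> estimate \<omega> n \<le> F (d u))"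
  using dose.AE_frequently_rate_le
proof eventually_elim
  case (elim \<omega>)
  show ?case
  proof (intro impI allI)
    fix N
    assume "\<forall>N. \<exists>n\<ge>N. X \<omega> n = u"
    with elim obtain n where "N \<le> n" "X \<omega> n = u" "estimate \<omega> n \<le> F (d u)"
      by (auto simp: allocated_responses estimate_compare_iff)
    then show "\<exists>n\<ge>N. X \<omega> n = u \<and> estimate \<omega> n \<le> F (d u)"
      by blast
  qed
qed

lemma AE_frequently_estimate_ge:
  "AE \<omega> in M. (\<forall>N. \<exists>n\<ge>N. X \<omega> n = u) \<longrightarrow> (\<forall>N. \<exists>n\<ge>N. X \<omega> n = u \<and> F (d u) \<le> estimate \<omega> n)"
  using dose.AE_frequently_rate_ge
proof eventually_elim
  case (elim \<omega>)
  show ?case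
  proof (intro impI allI)
    fix N
    assume "\<forall>N. \<exists>n\<ge>N. X \<omega> n = u"
    with elim obtain n where "N \<le> n" "X \<omega> n = u" "F (d u) \<le> estimate \<omega> n"
      by (auto simp: allocated_responses estimate_compare_iff)
    then show "\<exists>n\<ge>N. X \<omega> n = u \<and> F (d u) \<le> estimate \<omega> n"
      by blast
  qed
qed

end

context interval_design
begin

definition estimates_consistent :: "nat \<Rightarrow> real \<Rightarrow> 'a \<Rightarrow> bool" where
  "estimates_consistent u c \<omega> \<longleftrightarrow>
     (F (d u) < c \<longrightarrow> (\<exists>N. \<forall>n\<ge>N. X \<omega> n = u \<longrightarrow> estimate \<omega> n < c)) \<and>
     (c < F (d u) \<longrightarrow> (\<exists>N. \<forall>n\<ge>N. X \<omega> n = u \<longrightarrow> c < estimate \<omega> n)) \<and>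
     (F (d u) = c \<longrightarrow> (\<forall>N. \<exists>n\<ge>N. X \<omega> n = u) \<longrightarrow> (\<forall>N. \<exists>n\<ge>N. X \<omega> n = u \<and> estimate \<omega> n \<le> c)) \<and>
     (F (d u) = c \<longrightarrow> (\<forall>N. \<exists>n\<ge>N. X \<omega> n = u) \<longrightarrow> (\<forall>N. \<exists>n\<ge>N. X \<omega> n = u \<and> c \<le> estimate \<omega> n))"

lemma AE_estimates_consistent: "AE \<omega> in M. estimates_consistent u c \<omega>"
proof -
  interpret D: interval_design_dose M Y F d m x0 p dp1 dp2 u
    by (simp add: interval_design_dose_def interval_design_axioms)
  have "AE \<omega> in M. F (d u) < c \<longrightarrow> (\<exists>N. \<forall>n\<ge>N. X \<omega> n = u \<longrightarrow> estimate \<omega> n < c)"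
    by (cases "F (d u) < c") (simp_all add: D.AE_eventually_estimate_less)
  moreover have "AE \<omega> in M. c < F (d u) \<longrightarrow> (\<exists>N. \<forall>n\<ge>N. X \<omega> n = u \<longrightarrow> c < estimate \<omega> n)"
    by (cases "c < F (d u)") (simp_all add: D.AE_eventually_estimate_greater)
  ultimately show ?thesis
    using D.AE_frequently_estimate_le D.AE_frequently_estimate_ge
    unfolding estimates_consistent_def by eventually_elim blast
qed

theorem AE_interval_dynamics:
  assumes m_pos: "1 \<le> m" and x0: "x0 < m" and dp: "0 < dp1" "0 < dp2"
    and F_d_mono: "\<And>i j. i < j \<Longrightarrow> j < m \<Longrightarrow> F (d i) < F (d j)"
  shows "AE \<omega> in M. interval_dynamics (X \<omega>) (estimate \<omega>) m (p - dp1) (p + dp2) (\<lambda>u. F (d u))"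
proof -
  have "AE \<omega> in M. \<forall>u. estimates_consistent u (p - dp1) \<omega> \<and> estimates_consistent u (p + dp2) \<omega>"
    unfolding AE_all_countable by (intro allI AE_conjI AE_estimates_consistent)
  then show ?thesis
  proof eventually_elim
    case (elim \<omega>)
    show ?case
      by unfold_locales (use m_pos x0 dp F_d_mono X_Suc elim in \<open>auto simp: X_0 estimates_consistent_def\<close>)
  qed
qed

end

theorem corollary1:
  fixes M :: "'a measure" and Y :: "nat \<Rightarrow> 'a \<Rightarrow> bool"
    and F :: "real \<Rightarrow> real" and d :: "nat \<Rightarrow> real"
    and m x0 :: nat and p dp1 dp2 :: real
  assumes F_mono: "strict_mono F"
    and F_range: "\<And>x. 0 \<le> F x \<and> F x \<le> 1"
    and m_pos: "m \<ge> 1"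
    and d_mono: "strict_mono_on {..<m} d"
    and p: "0 < p" "p < 1"
    and dp: "dp1 > 0" "dp2 > 0"
    and x0: "x0 < m"
    and M: "prob_space M"
    and Y_meas: "\<And>i. Y i \<in> measurable M (count_space UNIV)"
    and Y_law: "\<And>n (ys :: nat \<Rightarrow> bool).
       measure M {\<omega> \<in> space M. (\<forall>i<n. Y i \<omega> = ys i) \<and> Y n \<omega>}
       = F (d (alloc m p dp1 dp2 x0 ys n)) * measure M {\<omega> \<in> space M. \<forall>i<n. Y i \<omega> = ys i}"
  shows
    "((\<forall>u<m. F (d u) \<notin> {p - dp1 <..< p + dp2}) \<and> F (d 0) \<le> p \<and> p \<le> F (d (m - 1))
       \<longrightarrow> (\<forall>j. j + 1 < m \<and> F (d j) \<le> p - dp1 \<and> F (d (j + 1)) \<ge> p + dp2 \<longrightarrow>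
            (AE \<omega> in M.
               (\<exists>N. \<forall>i\<ge>N. alloc m p dp1 dp2 x0 (\<lambda>k. Y k \<omega>) i \<in> {j, j + 1})
             \<and> (\<forall>N. \<exists>i\<ge>N. alloc m p dp1 dp2 x0 (\<lambda>k. Y k \<omega>) i = j)
             \<and> (\<forall>N. \<exists>i\<ge>N. alloc m p dp1 dp2 x0 (\<lambda>k. Y k \<omega>) i = j + 1))))
     \<and>
     (card {u. u < m \<and> F (d u) \<in> {p - dp1 <..< p + dp2}} > 1
       \<longrightarrow> (AE \<omega> in M. \<exists>v<m. F (d v) \<in> {p - dp1 <..< p + dp2} \<and>
              (\<exists>N. \<forall>i\<ge>N. alloc m p dp1 dp2 x0 (\<lambda>k. Y k \<omega>) i = v)))"
proof -
  interpret interval_design M Y F d m x0 p dp1 dp2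
    using M F_range Y_meas Y_law by (simp add: interval_design_def interval_design_axioms_def)
  have "F (d i) < F (d j)" if "i < j" "j < m" for i j
    using that by (intro strict_monoD[OF F_mono] strict_mono_onD[OF d_mono]) auto
  then have dynamics: "AE \<omega> in M. interval_dynamics (X \<omega>) (estimate \<omega>) m (p - dp1) (p + dp2) (\<lambda>u. F (d u))"
    using m_pos x0 dp by (intro AE_interval_dynamics)
  have alloc_X: "alloc m p dp1 dp2 x0 (\<lambda>k. Y k \<omega>) i = X \<omega> i" for \<omega> i
    by (simp add: X_def)
  show ?thesis
  proof (intro conjI impI allI)
    \<comment> \<open>the hypothesis that no dose is on target is implied by the conditions on j\<close>
    fix j
    assume j: "j + 1 < m \<and> F (d j) \<le> p - dp1 \<and> F (d (j + 1)) \<ge> p + dp2"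
    from dynamics show "AE \<omega> in M. (\<exists>N. \<forall>i\<ge>N. alloc m p dp1 dp2 x0 (\<lambda>k. Y k \<omega>) i \<in> {j, j + 1})
             \<and> (\<forall>N. \<exists>i\<ge>N. alloc m p dp1 dp2 x0 (\<lambda>k. Y k \<omega>) i = j)
             \<and> (\<forall>N. \<exists>i\<ge>N. alloc m p dp1 dp2 x0 (\<lambda>k. Y k \<omega>) i = j + 1)"
      unfolding alloc_X by eventually_elim (use j interval_dynamics.oscillation in
        \<open>auto simp: interval_dynamics.recurrent_def\<close>)
  next
    assume "1 < card {u. u < m \<and> F (d u) \<in> {p - dp1 <..< p + dp2}}"
    then obtain v0 where v0: "v0 < m" "F (d v0) \<in> {p - dp1 <..< p + dp2}"
      by (metis (no_types, lifting) card.empty empty_Collect_eq not_less_zero)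
    from dynamics show "AE \<omega> in M. \<exists>v<m. F (d v) \<in> {p - dp1 <..< p + dp2} \<and>
              (\<exists>N. \<forall>i\<ge>N. alloc m p dp1 dp2 x0 (\<lambda>k. Y k \<omega>) i = v)"
      unfolding alloc_X by eventually_elim (use v0 interval_dynamics.absorption in force)
  qed
qed

end
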